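(* Let $(\mathbf T,\mathbf A,\mathrm{VAR},\mathrm{OP},\mathrm{ABS},\mathrm{FRESH},\mathrm{FRESHABS},\_[\_/\_]_\_)$ be an FS model. Then there exist functions $f:\mathrm{term}\to\mathbf T$ and $f_{Abs}:\mathrm{abs}\to\mathbf A$ such that, for all good terms $X,Y$, good abstractions $A$, all $inp:(\mathrm{index},\mathrm{term})\mathrm{input}$ and $binp:(\mathrm{bindex},\mathrm{abs})\mathrm{input}$ with good values and domains of cardinality $<|\mathrm{var}|$, and all $\delta,xs,x,ys,y$: $f(\mathrm{Var}\;xs\;x)=\mathrm{VAR}\;xs\;x$; $f(\mathrm{Op}\;\delta\;inp\;binp)=\mathrm{OP}\;\delta\;(\uparrow f\;inp)\;(\uparrow f_{Abs}\;binp)$; $f_{Abs}(\mathrm{Abs}\;xs\;x\;X)=\mathrm{ABS}\;xs\;x\;(f\;X)$; $f(X[Y/y]_{ys})=(f\;X)[(f\;Y)/y]_{ys}$; $f_{Abs}(A[Y/y]_{ys})=(f_{Abs}\;A)[(f\;Y)/y]_{ys}$; $\mathrm{fresh}\;xs\;x\;X\Rightarrow\mathrm{FRESH}\;xs\;x\;(f\;X)$; $\mathrm{freshAbs}\;xs\;x\;A\Rightarrow\mathrm{FRESHABS}\;xs\;x\;(f_{Abs}\;A)$. Moreover, if $g:\mathrm{term}\to\mathbf T$ and $g_{Abs}:\mathrm{abs}\to\mathbf A$ satisfy the same properties, then $f\;X=g\;X$ for all good terms $X$ and $f_{Abs}\;A=g_{Abs}\;A$ for all good abstractions $A$.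
   Context: Fix types $\mathrm{var}$, $\mathrm{varsort}$, $\mathrm{index}$, $\mathrm{bindex}$, $\mathrm{opsym}$, with $|\mathrm{var}|$ an infinite regular cardinal. $(\alpha,\beta)\,\mathrm{input}$ = partial functions $\alpha\to\beta\;\mathrm{option}$; $\mathrm{dom}\,f=\{i\mid f\,i\ne\mathrm{None}\}$; $\uparrow P\;inp$ means $P$ holds of all defined values of $inp$; $\uparrow g\;inp$ applies $g$ to all defined values. Terms ($\mathrm{term}$) and abstractions ($\mathrm{abs}$) are alpha-equivalence classes of the free datatypes $\mathrm{qterm}=\mathrm{qVar}\;\mathrm{varsort}\;\mathrm{var}\mid\mathrm{qOp}\;\mathrm{opsym}\;((\mathrm{index},\mathrm{qterm})\mathrm{input})\;((\mathrm{bindex},\mathrm{qabs})\mathrm{input})$, $\mathrm{qabs}=\mathrm{qAbs}\;\mathrm{varsort}\;\mathrm{var}\;\mathrm{qterm}$ ($x$ of varsort $xs$ bound in $X$ in $\mathrm{qAbs}\;xs\;x\;X$), with lifted constructors $\mathrm{Var},\mathrm{Op},\mathrm{Abs}$; $\mathrm{fresh}/\mathrm{freshAbs}\;xs\;x$: the variable $x$ of varsort $xs$ does not occur free; $\_[Y/y]_{ys}$: capture-avoiding substitution of $Y$ for free occurrences of the variable $y$ of varsort $ys$ (on terms and abstractions). Good: every $\mathrm{Op}$ node has inputs with domains of cardinality $<|\mathrm{var}|$. An FS model consists of types $\mathbf T,\mathbf A$ and operations $\mathrm{VAR}:\mathrm{varsort}\to\mathrm{var}\to\mathbf T$, $\mathrm{OP}:\mathrm{opsym}\to(\mathrm{index},\mathbf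 T)\mathrm{input}\to(\mathrm{bindex},\mathbf A)\mathrm{input}\to\mathbf T$, $\mathrm{ABS}:\mathrm{varsort}\to\mathrm{var}\to\mathbf T\to\mathbf A$, $\mathrm{FRESH}:\mathrm{varsort}\to\mathrm{var}\to\mathbf T\to\mathrm{bool}$, $\mathrm{FRESHABS}:\mathrm{varsort}\to\mathrm{var}\to\mathbf A\to\mathrm{bool}$, $\_[\_/\_]_\_:\mathbf T\to\mathbf T\to\mathrm{var}\to\mathrm{varsort}\to\mathbf T$ and $\_[\_/\_]_\_:\mathbf A\to\mathbf T\to\mathrm{var}\to\mathrm{varsort}\to\mathbf A$, satisfying, for all arguments (with $inp,binp$ ranging over inputs whose domains have cardinality $<|\mathrm{var}|$): (F1) $(ys,y)\ne(xs,x)\Rightarrow\mathrm{FRESH}\;ys\;y\;(\mathrm{VAR}\;xs\;x)$; (F2) $\uparrow(\mathrm{FRESH}\;ys\;y)\;inp\wedge\uparrow(\mathrm{FRESHABS}\;ys\;y)\;binp\Rightarrow\mathrm{FRESH}\;ys\;y\;(\mathrm{OP}\;\delta\;inp\;binp)$; (F3) $(ys,y)=(xs,x)\vee\mathrm{FRESH}\;ys\;y\;X\Rightarrow\mathrm{FRESHABS}\;ys\;y\;(\mathrm{ABS}\;xs\;x\;X)$; (S1) $(\mathrm{VAR}\;xs\;x)[Y/y]_{ys}=Y$ if $(xs,x)=(ys,y)$, else $\mathrm{VAR}\;xs\;x$; (S2) $(\mathrm{OP}\;\delta\;inp\;binp)[Y/y]_{ys}=\mathrm{OP}\;\delta\;(\uparrow(\_[Y/y]_{ys})\;inp)\;(\uparrow(\_[Y/y]_{ys})\;binp)$;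 (S3) $(xs,x)\ne(ys,y)\wedge\mathrm{FRESH}\;xs\;x\;Y\Rightarrow(\mathrm{ABS}\;xs\;x\;X)[Y/y]_{ys}=\mathrm{ABS}\;xs\;x\;(X[Y/y]_{ys})$; (R1) $y\notin\{x,x'\}\wedge\mathrm{FRESH}\;xs\;y\;X\wedge\mathrm{FRESH}\;xs\;y\;X'\wedge X[(\mathrm{VAR}\;xs\;y)/x]_{xs}=X'[(\mathrm{VAR}\;xs\;y)/x']_{xs}\Rightarrow\mathrm{ABS}\;xs\;x\;X=\mathrm{ABS}\;xs\;x'\;X'$; (R2) $\mathrm{FRESH}\;xs\;y\;X\Rightarrow\mathrm{ABS}\;xs\;x\;X=\mathrm{ABS}\;xs\;y\;(X[(\mathrm{VAR}\;xs\;y)/x]_{xs})$. *)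

theory Defs
  imports Main
begin

unbundle cardinal_syntax

text \<open>An input is a partial function, represented as a function into option.\<close>

definition liftAll :: "('b \<Rightarrow> bool) \<Rightarrow> ('a \<Rightarrow> 'b option) \<Rightarrow> bool" where
  "liftAll P inp \<equiv> \<forall>i v. inp i = Some v \<longrightarrow> P v"

definition lift :: "('b \<Rightarrow> 'c) \<Rightarrow> ('a \<Rightarrow> 'b option) \<Rightarrow> 'a \<Rightarrow> 'c option" where
  "lift h inp \<equiv> \<lambda>i. map_option h (inp i)"

datatype ('index,'bindex,'varSort,'var,'opSym) qTerm =
  qVar 'varSort 'var
| qOp 'opSym "'index \<Rightarrow> ('index,'bindex,'varSort,'var,'opSym) qTerm option"
           "'bindex \<Rightarrow> ('index,'bindex,'varSort,'var,'opSym) qAbs option"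
and ('index,'bindex,'varSort,'var,'opSym) qAbs =
  qAbs 'varSort 'var "('index,'bindex,'varSort,'var,'opSym) qTerm"

primrec qFresh and qFreshAbs where
  "qFresh xs x (qVar ys y) = (xs \<noteq> ys \<or> x \<noteq> y)"
| "qFresh xs x (qOp d inp binp) =
     ((\<forall>i. pred_option (qFresh xs x) (inp i)) \<and> (\<forall>i. pred_option (qFreshAbs xs x) (binp i)))"
| "qFreshAbs xs x (qAbs ys y X) = ((xs = ys \<and> x = y) \<or> qFresh xs x X)"

text \<open>Absolute freshness: the variable does not occur at all (neither free nor bound).\<close>
primrec qAFresh and qAFreshAbs where
  "qAFresh xs x (qVar ys y) = (xs \<noteq> ys \<or> x \<noteq> y)"
| "qAFresh xs x (qOp d inp binp) =
     ((\<forall>i. pred_option (qAFresh xs x) (inp i)) \<and> (\<forall>i. pred_option (qAFreshAbs xs x) (binp i)))"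
| "qAFreshAbs xs x (qAbs ys y X) = ((xs \<noteq> ys \<or> x \<noteq> y) \<and> qAFresh xs x X)"

definition sw :: "'varSort \<Rightarrow> 'var \<Rightarrow> 'var \<Rightarrow> 'varSort \<Rightarrow> 'var \<Rightarrow> 'var" where
  "sw zs x y zs' z \<equiv> (if zs = zs' then (if z = x then y else if z = y then x else z) else z)"

primrec qSwap and qSwapAbs where
  "qSwap zs x y (qVar zs' z) = qVar zs' (sw zs x y zs' z)"
| "qSwap zs x y (qOp d inp binp) =
     qOp d (\<lambda>i. map_option (qSwap zs x y) (inp i)) (\<lambda>i. map_option (qSwapAbs zs x y) (binp i))"
| "qSwapAbs zs x y (qAbs zs' z X) = qAbs zs' (sw zs x y zs' z) (qSwap zs x y X)"

primrec qGood :: "('index,'bindex,'varSort,'var,'opSym) qTerm \<Rightarrow> bool"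
  and qGoodAbs :: "('index,'bindex,'varSort,'var,'opSym) qAbs \<Rightarrow> bool" where
  "qGood (qVar xs x) = True"
| "qGood (qOp d inp binp) =
     ((\<forall>i. pred_option qGood (inp i)) \<and> (\<forall>i. pred_option qGoodAbs (binp i)) \<and>
      |dom inp| <o |UNIV :: 'var set| \<and> |dom binp| <o |UNIV :: 'var set| )"
| "qGoodAbs (qAbs xs x X) = qGood X"

inductive alpha :: "('index,'bindex,'varSort,'var,'opSym) qTerm \<Rightarrow> ('index,'bindex,'varSort,'var,'opSym) qTerm \<Rightarrow> bool"
  and alphaAbs :: "('index,'bindex,'varSort,'var,'opSym) qAbs \<Rightarrow> ('index,'bindex,'varSort,'var,'opSym) qAbs \<Rightarrow> bool"
where
  alpha_Var: "alpha (qVar xs x) (qVar xs x)"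
| alpha_Op: "\<lbrakk>\<forall>i. (inp i = None) = (inp' i = None);
              \<forall>i. (binp i = None) = (binp' i = None);
              \<forall>i X X'. inp i = Some X \<and> inp' i = Some X' \<longrightarrow> alpha X X';
              \<forall>i A A'. binp i = Some A \<and> binp' i = Some A' \<longrightarrow> alphaAbs A A'\<rbrakk>
             \<Longrightarrow> alpha (qOp d inp binp) (qOp d inp' binp')"
| alphaAbs_Abs: "\<lbrakk>y \<noteq> x; y \<noteq> x'; qAFresh xs y X; qAFresh xs y X';
                  alpha (qSwap xs y x X) (qSwap xs y x' X')\<rbrakk>
                 \<Longrightarrow> alphaAbs (qAbs xs x X) (qAbs xs x' X')"

text \<open>Terms and abstractions: classes modulo alpha (we quotient by the equivalence closure,
  which coincides with alpha wherever alpha is an equivalence).\<close>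

quotient_type ('index,'bindex,'varSort,'var,'opSym) "term" =
  "('index,'bindex,'varSort,'var,'opSym) qTerm" / "equivclp alpha"
  morphisms rep_term abs_term
  by simp

quotient_type ('index,'bindex,'varSort,'var,'opSym) "abs" =
  "('index,'bindex,'varSort,'var,'opSym) qAbs" / "equivclp alphaAbs"
  morphisms rep_abs abs_abs
  by simp

text \<open>Environments map (sort, variable) to an optional replacement; None means identity.
  Bound variables are renamed to a variable that occurs nowhere in the body and in no
  replacement term.\<close>

primrec qPsubst :: "('varSort \<Rightarrow> 'var \<Rightarrow> ('index,'bindex,'varSort,'var,'opSym) qTerm option)
                     \<Rightarrow> ('index,'bindex,'varSort,'var,'opSym) qTerm \<Rightarrow> ('index,'bindex,'varSort,'var,'opSym) qTerm"
  and qPsubstAbs :: "('varSort \<Rightarrow> 'var \<Rightarrow> ('index,'bindex,'varSort,'var,'opSym) qTerm option)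
                     \<Rightarrow> ('index,'bindex,'varSort,'var,'opSym) qAbs \<Rightarrow> ('index,'bindex,'varSort,'var,'opSym) qAbs"
where
  "qPsubst rho (qVar xs x) = (case rho xs x of None \<Rightarrow> qVar xs x | Some Z \<Rightarrow> Z)"
| "qPsubst rho (qOp d inp binp) =
     qOp d (\<lambda>i. map_option (qPsubst rho) (inp i)) (\<lambda>i. map_option (qPsubstAbs rho) (binp i))"
| "qPsubstAbs rho (qAbs xs x X) =
     (let x' = (SOME x'. qAFresh xs x' X \<and> (\<forall>zs z Z. rho zs z = Some Z \<longrightarrow> qAFresh xs x' Z))
      in qAbs xs x' (qPsubst (rho(xs := (rho xs)(x := Some (qVar xs x')))) X))"

definition qSubst where
  "qSubst X Y y ys \<equiv> qPsubst ((\<lambda>_ _. None)(ys := (\<lambda>_. None)(y := Some Y))) X"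

definition qSubstAbs where
  "qSubstAbs A Y y ys \<equiv> qPsubstAbs ((\<lambda>_ _. None)(ys := (\<lambda>_. None)(y := Some Y))) A"

definition Var :: "'varSort \<Rightarrow> 'var \<Rightarrow> ('index,'bindex,'varSort,'var,'opSym) term" where
  "Var xs x \<equiv> abs_term (qVar xs x)"

definition Op :: "'opSym \<Rightarrow> ('index \<Rightarrow> ('index,'bindex,'varSort,'var,'opSym) term option)
                 \<Rightarrow> ('bindex \<Rightarrow> ('index,'bindex,'varSort,'var,'opSym) abs option)
                 \<Rightarrow> ('index,'bindex,'varSort,'var,'opSym) term" where
  "Op d inp binp \<equiv> abs_term (qOp d (lift rep_term inp) (lift rep_abs binp))"

definition Abs :: "'varSort \<Rightarrow> 'var \<Rightarrow> ('index,'bindex,'varSort,'var,'opSym) term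
                  \<Rightarrow> ('index,'bindex,'varSort,'var,'opSym) abs" where
  "Abs xs x X \<equiv> abs_abs (qAbs xs x (rep_term X))"

definition fresh :: "'varSort \<Rightarrow> 'var \<Rightarrow> ('index,'bindex,'varSort,'var,'opSym) term \<Rightarrow> bool" where
  "fresh xs x X \<equiv> qFresh xs x (rep_term X)"

definition freshAbs :: "'varSort \<Rightarrow> 'var \<Rightarrow> ('index,'bindex,'varSort,'var,'opSym) abs \<Rightarrow> bool" where
  "freshAbs xs x A \<equiv> qFreshAbs xs x (rep_abs A)"

definition good :: "('index,'bindex,'varSort,'var,'opSym) term \<Rightarrow> bool" where
  "good X \<equiv> qGood (rep_term X)"

definition goodAbs :: "('index,'bindex,'varSort,'var,'opSym) abs \<Rightarrow> bool" where
  "goodAbs A \<equiv> qGoodAbs (rep_abs A)"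

text \<open>subst X Y y ys is X[Y/y]_ys.\<close>
definition subst :: "('index,'bindex,'varSort,'var,'opSym) term \<Rightarrow> ('index,'bindex,'varSort,'var,'opSym) term
                    \<Rightarrow> 'var \<Rightarrow> 'varSort \<Rightarrow> ('index,'bindex,'varSort,'var,'opSym) term" where
  "subst X Y y ys \<equiv> abs_term (qSubst (rep_term X) (rep_term Y) y ys)"

definition substAbs :: "('index,'bindex,'varSort,'var,'opSym) abs \<Rightarrow> ('index,'bindex,'varSort,'var,'opSym) term
                    \<Rightarrow> 'var \<Rightarrow> 'varSort \<Rightarrow> ('index,'bindex,'varSort,'var,'opSym) abs" where
  "substAbs A Y y ys \<equiv> abs_abs (qSubstAbs (rep_abs A) (rep_term Y) y ys)"

definition FSmodel ::
  "('varSort \<Rightarrow> 'var \<Rightarrow> 'T)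
   \<Rightarrow> ('opSym \<Rightarrow> ('index \<Rightarrow> 'T option) \<Rightarrow> ('bindex \<Rightarrow> 'A option) \<Rightarrow> 'T)
   \<Rightarrow> ('varSort \<Rightarrow> 'var \<Rightarrow> 'T \<Rightarrow> 'A)
   \<Rightarrow> ('varSort \<Rightarrow> 'var \<Rightarrow> 'T \<Rightarrow> bool)
   \<Rightarrow> ('varSort \<Rightarrow> 'var \<Rightarrow> 'A \<Rightarrow> bool)
   \<Rightarrow> ('T \<Rightarrow> 'T \<Rightarrow> 'var \<Rightarrow> 'varSort \<Rightarrow> 'T)
   \<Rightarrow> ('A \<Rightarrow> 'T \<Rightarrow> 'var \<Rightarrow> 'varSort \<Rightarrow> 'A) \<Rightarrow> bool" where
  "FSmodel VAR OP ABS FRESH FRESHABS SUBST SUBSTABS \<equiv>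
    (\<forall>ys y xs x. (ys, y) \<noteq> (xs, x) \<longrightarrow> FRESH ys y (VAR xs x)) \<and>
    (\<forall>ys y d inp binp. |dom inp| <o |UNIV :: 'var set| \<and> |dom binp| <o |UNIV :: 'var set| \<and>
        liftAll (FRESH ys y) inp \<and> liftAll (FRESHABS ys y) binp
        \<longrightarrow> FRESH ys y (OP d inp binp)) \<and>
    (\<forall>ys y xs x X. (ys, y) = (xs, x) \<or> FRESH ys y X \<longrightarrow> FRESHABS ys y (ABS xs x X)) \<and>
    (\<forall>xs x Y y ys. SUBST (VAR xs x) Y y ys = (if (xs, x) = (ys, y) then Y else VAR xs x)) \<and>
    (\<forall>d inp binp Y y ys. |dom inp| <o |UNIV :: 'var set| \<and> |dom binp| <o |UNIV :: 'var set|
        \<longrightarrow> SUBST (OP d inp binp) Y y ys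
            = OP d (lift (\<lambda>X. SUBST X Y y ys) inp) (lift (\<lambda>A. SUBSTABS A Y y ys) binp)) \<and>
    (\<forall>xs x X Y y ys. (xs, x) \<noteq> (ys, y) \<and> FRESH xs x Y
        \<longrightarrow> SUBSTABS (ABS xs x X) Y y ys = ABS xs x (SUBST X Y y ys)) \<and>
    (\<forall>xs x x' y X X'. y \<notin> {x, x'} \<and> FRESH xs y X \<and> FRESH xs y X' \<and>
        SUBST X (VAR xs y) x xs = SUBST X' (VAR xs y) x' xs
        \<longrightarrow> ABS xs x X = ABS xs x' X') \<and>
    (\<forall>xs x y X. FRESH xs y X \<longrightarrow> ABS xs x X = ABS xs y (SUBST X (VAR xs y) x xs))"

definition FSmorph ::
  "('varSort \<Rightarrow> 'var \<Rightarrow> 'T)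
   \<Rightarrow> ('opSym \<Rightarrow> ('index \<Rightarrow> 'T option) \<Rightarrow> ('bindex \<Rightarrow> 'A option) \<Rightarrow> 'T)
   \<Rightarrow> ('varSort \<Rightarrow> 'var \<Rightarrow> 'T \<Rightarrow> 'A)
   \<Rightarrow> ('varSort \<Rightarrow> 'var \<Rightarrow> 'T \<Rightarrow> bool)
   \<Rightarrow> ('varSort \<Rightarrow> 'var \<Rightarrow> 'A \<Rightarrow> bool)
   \<Rightarrow> ('T \<Rightarrow> 'T \<Rightarrow> 'var \<Rightarrow> 'varSort \<Rightarrow> 'T)
   \<Rightarrow> ('A \<Rightarrow> 'T \<Rightarrow> 'var \<Rightarrow> 'varSort \<Rightarrow> 'A)
   \<Rightarrow> (('index,'bindex,'varSort,'var,'opSym) term \<Rightarrow> 'T)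
   \<Rightarrow> (('index,'bindex,'varSort,'var,'opSym) abs \<Rightarrow> 'A) \<Rightarrow> bool" where
  "FSmorph VAR OP ABS FRESH FRESHABS SUBST SUBSTABS f fAbs \<equiv>
    (\<forall>xs x. f (Var xs x) = VAR xs x) \<and>
    (\<forall>d inp binp. liftAll good inp \<and> liftAll goodAbs binp \<and>
        |dom inp| <o |UNIV :: 'var set| \<and> |dom binp| <o |UNIV :: 'var set|
        \<longrightarrow> f (Op d inp binp) = OP d (lift f inp) (lift fAbs binp)) \<and>
    (\<forall>xs x X. good X \<longrightarrow> fAbs (Abs xs x X) = ABS xs x (f X)) \<and>
    (\<forall>X Y y ys. good X \<and> good Y \<longrightarrow> f (subst X Y y ys) = SUBST (f X) (f Y) y ys) \<and>
    (\<forall>A Y y ys. goodAbs A \<and> good Y \<longrightarrow> fAbs (substAbs A Y y ys) = SUBSTABS (fAbs A) (f Y) y ys) \<and>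
    (\<forall>xs x X. good X \<and> fresh xs x X \<longrightarrow> FRESH xs x (f X)) \<and>
    (\<forall>xs x A. goodAbs A \<and> freshAbs xs x A \<longrightarrow> FRESHABS xs x (fAbs A))"

end

theory Submission
  imports Defs
begin

text \<open>The morphism is defined by recursion on quasi-terms, the free datatype: \<open>qVar\<close>, \<open>qOp\<close>, \<open>qAbs\<close>
  go to \<open>VAR\<close>, \<open>OP\<close>, \<open>ABS\<close>. Swapping a variable with an absent one is interpreted as substitution of
  that variable, so clause (R1) identifies the interpretations of alpha-equivalent quasi-terms and the
  recursion descends to terms; (F1)--(F3) give preservation of freshness. Commutation with substitution
  is proved for the capture-avoiding parallel substitution underlying \<open>subst\<close>, by induction on the
  quasi-term: at a binder that substitution picks some fresh bound variable, and clause (R2) shows that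
  the interpretation does not depend on the pick. Uniqueness holds because good terms are generated by
  \<open>Var\<close>, \<open>Op\<close> and \<open>Abs\<close> from good components, so any morphism agrees with the recursion on representatives.\<close>

lemma pred_option_iff: "pred_option P oo = (\<forall>y. oo = Some y \<longrightarrow> P y)"
  by (cases oo) auto

lemma map_option_cong_Some: "(\<And>y. oo = Some y \<Longrightarrow> f y = g y) \<Longrightarrow> map_option f oo = map_option g oo"
  by (cases oo) auto

lemma map_option_idI: "(\<And>y. oo = Some y \<Longrightarrow> f y = y) \<Longrightarrow> map_option f oo = oo"
  by (cases oo) auto

lemma map_option_eqI:
  "(f = None) = (g = None) \<Longrightarrow> (\<And>X X'. f = Some X \<Longrightarrow> g = Some X' \<Longrightarrow> h X = h X')
   \<Longrightarrow> map_option h f = map_option h g"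
  by (cases f; cases g) auto

lemma pred_option_eqI:
  "(f = None) = (g = None) \<Longrightarrow> (\<And>X X'. f = Some X \<Longrightarrow> g = Some X' \<Longrightarrow> P X = Q X')
   \<Longrightarrow> pred_option P f = pred_option Q g"
  by (cases f; cases g) auto

lemma dom_map_option[simp]: "dom (\<lambda>i. map_option f (inp i)) = dom inp"
  by (auto simp: dom_def)

lemma exists_var_not_in_small_set:
  assumes "|S| <o |UNIV :: 'v set|"
  shows "\<exists>x::'v. (xs, x) \<notin> S"
proof (rule ccontr)
  assume "\<not> ?thesis"
  hence "UNIV \<subseteq> snd ` S" by force
  hence "|UNIV :: 'v set| \<le>o |snd ` S|" by (rule card_of_mono1)
  also have "|snd ` S| \<le>o |S|" by (rule card_of_image)
  finally show False using assms not_ordLess_ordLeq by blast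
qed

lemma qTerm_qAbs_induct[case_names Var Op Abs]:
  fixes P :: "('index,'bindex,'varSort,'var,'opSym) qTerm \<Rightarrow> bool"
    and Q :: "('index,'bindex,'varSort,'var,'opSym) qAbs \<Rightarrow> bool"
  assumes Var: "\<And>xs x. P (qVar xs x)"
    and Op: "\<And>d inp binp. (\<And>i X. inp i = Some X \<Longrightarrow> P X) \<Longrightarrow> (\<And>i A. binp i = Some A \<Longrightarrow> Q A)
        \<Longrightarrow> P (qOp d inp binp)"
    and Abs: "\<And>xs x X. P X \<Longrightarrow> Q (qAbs xs x X)"
  shows "P X" and "Q A"
proof -
  have "P X \<and> Q A"
    by (rule qTerm_qAbs.induct) (fact Var, rule Op, blast+, erule Abs)
  then show "P X" "Q A" by simp_all
qed

definition qVars where "qVars X = {(xs, x). \<not> qAFresh xs x X}"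
definition qVarsAbs where "qVarsAbs A = {(xs, x). \<not> qAFreshAbs xs x A}"

lemma qVars_simps:
  "qVars (qVar xs x) = {(xs, x)}"
  "qVars (qOp d inp binp) =
     (\<Union>i\<in>dom inp. qVars (the (inp i))) \<union> (\<Union>i\<in>dom binp. qVarsAbs (the (binp i)))"
  "qVarsAbs (qAbs xs x X) = insert (xs, x) (qVars X)"
  by (auto simp: qVars_def qVarsAbs_def pred_option_def dom_def split: option.splits)

lemma qAFresh_imp_qFresh:
  fixes X :: "('index,'bindex,'varSort,'var,'opSym) qTerm"
    and A :: "('index,'bindex,'varSort,'var,'opSym) qAbs"
  shows "qAFresh xs x X \<Longrightarrow> qFresh xs x X" and "qAFreshAbs xs x A \<Longrightarrow> qFreshAbs xs x A"
  by (induct X and A rule: qTerm_qAbs_induct) (auto simp: pred_option_iff)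

lemma qGood_qOpD:
  fixes inp :: "'index \<Rightarrow> ('index,'bindex,'varSort,'var,'opSym) qTerm option"
    and binp :: "'bindex \<Rightarrow> ('index,'bindex,'varSort,'var,'opSym) qAbs option"
  assumes "qGood (qOp d inp binp)"
  shows "\<And>i X. inp i = Some X \<Longrightarrow> qGood X" "\<And>i A. binp i = Some A \<Longrightarrow> qGoodAbs A"
    "|dom inp| <o |UNIV :: 'var set|" "|dom binp| <o |UNIV :: 'var set|"
  using assms by (auto simp: pred_option_iff)

locale infinite_regular_var =
  fixes var_type :: "'var itself"
  assumes var_infinite: "infinite (UNIV :: 'var set)"
    and var_regular: "regularCard |UNIV :: 'var set|"
begin

lemma small_Un:
  "|A| <o |UNIV :: 'var set| \<Longrightarrow> |B| <o |UNIV :: 'var set| \<Longrightarrow> |A \<union> B| <o |UNIV :: 'var set|"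
  by (rule card_of_Un_ordLess_infinite[OF var_infinite])

lemma small_UNION:
  "|I| <o |UNIV :: 'var set| \<Longrightarrow> (\<And>i. i \<in> I \<Longrightarrow> |A i| <o |UNIV :: 'var set| )
   \<Longrightarrow> |\<Union>i\<in>I. A i| <o |UNIV :: 'var set|"
  by (rule regularCard_UNION_bound[OF _ var_regular])
     (use var_infinite in \<open>simp_all add: cinfinite_def card_of_card_order_on Field_card_of\<close>)

lemma small_finite: "finite A \<Longrightarrow> |A| <o |UNIV :: 'var set|"
  using finite_ordLess_infinite[of "|A|" "|UNIV :: 'var set|"] var_infinite
  by (simp add: card_of_well_order_on Field_card_of)

lemma small_insert: "|A| <o |UNIV :: 'var set| \<Longrightarrow> |insert a A| <o |UNIV :: 'var set|"
  by (metis insert_is_Un small_Un small_finite finite.intros)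

text \<open>Goodness bounds the number of children of every node, and \<open>|var|\<close> is regular, so a good
  quasi-term contains fewer than \<open>|var|\<close> variables.\<close>

lemma qGood_qVars_small:
  fixes X :: "('index,'bindex,'varSort,'var,'opSym) qTerm"
    and A :: "('index,'bindex,'varSort,'var,'opSym) qAbs"
  shows "qGood X \<Longrightarrow> |qVars X| <o |UNIV :: 'var set|"
    and "qGoodAbs A \<Longrightarrow> |qVarsAbs A| <o |UNIV :: 'var set|"
proof (induct X and A rule: qTerm_qAbs_induct)
  case (Op d inp binp)
  note good = qGood_qOpD[OF Op(3)]
  have "|qVars X| <o |UNIV :: 'var set|" if "inp i = Some X" for i X
    using Op(1) good(1) that by blast
  moreover have "|qVarsAbs A| <o |UNIV :: 'var set|" if "binp i = Some A" for i A
    using Op(2) good(2) that by blast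
  ultimately show ?case unfolding qVars_simps
    by (intro small_Un small_UNION good(3,4)) auto
qed (simp_all add: qVars_simps small_finite small_insert)

lemma exists_qAFresh:
  fixes Xs :: "('index,'bindex,'varSort,'var,'opSym) qTerm set"
  assumes "finite Xs" "\<And>X. X \<in> Xs \<Longrightarrow> qGood X" "finite F"
  shows "\<exists>y. y \<notin> F \<and> (\<forall>X\<in>Xs. qAFresh xs y X)"
proof -
  have "|(\<Union>X\<in>Xs. qVars X) \<union> Pair xs ` F| <o |UNIV :: 'var set|"
    using assms by (intro small_Un small_UNION small_finite qGood_qVars_small) auto
  from exists_var_not_in_small_set[OF this, of xs] show ?thesis by (auto simp: qVars_def)
qed

end

lemma sw_invol[simp]: "sw zs x y zs' (sw zs x y zs' z) = z"
  by (auto simp: sw_def)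

lemma sw_inj[simp]: "(sw zs x y s a = sw zs x y s b) = (a = b)"
  by (auto simp: sw_def)

lemma sw_simps[simp]: "sw zs x y zs x = y" "sw zs x y zs y = x"
  "v \<noteq> x \<Longrightarrow> v \<noteq> y \<Longrightarrow> sw zs x y s v = v"
  by (auto simp: sw_def)

lemma sw_conj: "sw zs a b s (sw xs y x s v) = sw xs (sw zs a b xs y) (sw zs a b xs x) s (sw zs a b s v)"
  by (auto simp: sw_def)

lemma qAFresh_qSwap:
  fixes X :: "('index,'bindex,'varSort,'var,'opSym) qTerm"
    and A :: "('index,'bindex,'varSort,'var,'opSym) qAbs"
  shows "qAFresh s v (qSwap zs a b X) = qAFresh s (sw zs a b s v) X"
    and "qAFreshAbs s v (qSwapAbs zs a b A) = qAFreshAbs s (sw zs a b s v) A"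
  by (induct X and A rule: qTerm_qAbs_induct)
     (auto simp: pred_option_iff, metis+)

lemma qGood_qSwap[simp]:
  fixes X :: "('index,'bindex,'varSort,'var,'opSym) qTerm"
    and A :: "('index,'bindex,'varSort,'var,'opSym) qAbs"
  shows "qGood (qSwap zs a b X) = qGood X" and "qGoodAbs (qSwapAbs zs a b A) = qGoodAbs A"
proof (induct X and A rule: qTerm_qAbs_induct)
  case (Op d inp binp)
  have "pred_option qGood (map_option (qSwap zs a b) (inp i)) = pred_option qGood (inp i)" for i
    using Op(1)[of i] by (cases "inp i") simp_all
  moreover have "pred_option qGoodAbs (map_option (qSwapAbs zs a b) (binp j)) = pred_option qGoodAbs (binp j)" for j
    using Op(2)[of j] by (cases "binp j") simp_all
  ultimately show ?case by simp
qed auto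

lemma qSwap_conj:
  fixes X :: "('index,'bindex,'varSort,'var,'opSym) qTerm"
    and A :: "('index,'bindex,'varSort,'var,'opSym) qAbs"
  shows "qSwap zs a b (qSwap xs y x X) = qSwap xs (sw zs a b xs y) (sw zs a b xs x) (qSwap zs a b X)"
    and "qSwapAbs zs a b (qSwapAbs xs y x A) = qSwapAbs xs (sw zs a b xs y) (sw zs a b xs x) (qSwapAbs zs a b A)"
proof (induct X and A rule: qTerm_qAbs_induct)
  case (Op d inp binp)
  then show ?case by (auto simp: option.map_comp intro!: map_option_cong_Some)
qed (simp_all only: qSwap.simps qSwapAbs.simps sw_conj[of zs a b _ xs y x])

lemma qSwap_qSwap_absent:
  fixes X :: "('index,'bindex,'varSort,'var,'opSym) qTerm"
    and A :: "('index,'bindex,'varSort,'var,'opSym) qAbs"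
  shows "qAFresh xs y X \<Longrightarrow> qAFresh xs z X \<Longrightarrow> qSwap xs z y (qSwap xs y x X) = qSwap xs z x X"
    and "qAFreshAbs xs y A \<Longrightarrow> qAFreshAbs xs z A \<Longrightarrow> qSwapAbs xs z y (qSwapAbs xs y x A) = qSwapAbs xs z x A"
  by (induct X and A rule: qTerm_qAbs_induct)
     (auto simp: option.map_comp sw_def pred_option_iff intro!: map_option_cong_Some)

text \<open>Iterated swapping, by a list of \<open>(sort, variable, variable)\<close> triples applied right to left.\<close>

primrec swL :: "('varSort \<times> 'var \<times> 'var) list \<Rightarrow> 'varSort \<Rightarrow> 'var \<Rightarrow> 'var" where
  "swL [] s v = v"
| "swL (t # l) s v = (case t of (zs, a, b) \<Rightarrow> sw zs a b s (swL l s v))"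

primrec qSwapL where
  "qSwapL [] X = X"
| "qSwapL (t # l) X = (case t of (zs, a, b) \<Rightarrow> qSwap zs a b (qSwapL l X))"

primrec qSwapLAbs where
  "qSwapLAbs [] A = A"
| "qSwapLAbs (t # l) A = (case t of (zs, a, b) \<Rightarrow> qSwapAbs zs a b (qSwapLAbs l A))"

lemma qSwapL_fun[simp]:
  "qSwapL [] = id" "qSwapL ((zs, a, b) # l) = qSwap zs a b \<circ> qSwapL l"
  "qSwapLAbs [] = id" "qSwapLAbs ((zs, a, b) # l) = qSwapAbs zs a b \<circ> qSwapLAbs l"
  by (auto simp: fun_eq_iff)

lemma qSwapL_simps[simp]:
  "qSwapL l (qVar xs x) = qVar xs (swL l xs x)"
  "qSwapL l (qOp d inp binp) = qOp d (\<lambda>i. map_option (qSwapL l) (inp i)) (\<lambda>i. map_option (qSwapLAbs l) (binp i))"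
  "qSwapLAbs l (qAbs xs x X) = qAbs xs (swL l xs x) (qSwapL l X)"
  by (induct l) (auto simp: option.map_comp option.map_id split: prod.splits)

lemma qSwapL_append: "qSwapL (l @ l') X = qSwapL l (qSwapL l' X)"
  by (induct l) auto

lemma qGood_qSwapL[simp]: "qGood (qSwapL l X) = qGood X"
  by (induct l) (auto split: prod.splits)

text \<open>Induction on quasi-terms in which the hypothesis for the body of an abstraction holds for
  all its swapped variants: this lets the bound variable be renamed before the hypothesis is used.\<close>

lemma qTerm_qAbs_swap_induct[case_names Var Op Abs]:
  fixes P :: "('index,'bindex,'varSort,'var,'opSym) qTerm \<Rightarrow> bool"
    and Q :: "('index,'bindex,'varSort,'var,'opSym) qAbs \<Rightarrow> bool"
  assumes qvar: "\<And>xs x. P (qVar xs x)"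
    and qop: "\<And>d inp binp. (\<And>i X. inp i = Some X \<Longrightarrow> P X) \<Longrightarrow> (\<And>i A. binp i = Some A \<Longrightarrow> Q A)
        \<Longrightarrow> P (qOp d inp binp)"
    and qabs: "\<And>xs x X. (\<And>l. P (qSwapL l X)) \<Longrightarrow> Q (qAbs xs x X)"
  shows "P X" and "Q A"
proof -
  have "\<forall>l. P (qSwapL l X)" and "\<forall>l. Q (qSwapLAbs l A)"
  proof (induct X and A rule: qTerm_qAbs_induct)
    case (Op d inp binp)
    show ?case by (auto intro!: qop dest: Op)
  next
    case (Abs xs x X)
    show ?case by (auto intro!: qabs simp: qSwapL_append[symmetric] Abs)
  qed (simp add: qvar)
  from this[THEN spec, of "[]"] show "P X" "Q A" by simp_all
qed

section \<open>Alpha-equivalence\<close>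

inductive_cases alpha_qVarE: "alpha (qVar xs x) Y"
inductive_cases alpha_qOpE: "alpha (qOp d inp binp) Y"
inductive_cases alphaAbs_qAbsE: "alphaAbs (qAbs xs x X) B"

lemma alpha_qGood:
  fixes X :: "('index,'bindex,'varSort,'var,'opSym) qTerm"
    and A :: "('index,'bindex,'varSort,'var,'opSym) qAbs"
  shows "alpha X Y \<Longrightarrow> qGood X = qGood Y" and "alphaAbs A B \<Longrightarrow> qGoodAbs A = qGoodAbs B"
proof (induct rule: alpha_alphaAbs.inducts)
  case (alpha_Op inp inp' binp binp' d)
  have "dom inp = dom inp'" "dom binp = dom binp'"
    using alpha_Op(1,2) by (auto simp: dom_def)
  moreover have "pred_option qGood (inp i) = pred_option qGood (inp' i)" for i
    using alpha_Op by (auto intro!: pred_option_eqI)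
  moreover have "pred_option qGoodAbs (binp j) = pred_option qGoodAbs (binp' j)" for j
    using alpha_Op by (auto intro!: pred_option_eqI)
  ultimately show ?case by simp
qed simp_all

lemma alpha_qSwap:
  fixes X :: "('index,'bindex,'varSort,'var,'opSym) qTerm"
    and A :: "('index,'bindex,'varSort,'var,'opSym) qAbs"
  shows "alpha X Y \<Longrightarrow> alpha (qSwap zs a b X) (qSwap zs a b Y)"
    and "alphaAbs A B \<Longrightarrow> alphaAbs (qSwapAbs zs a b A) (qSwapAbs zs a b B)"
proof (induct rule: alpha_alphaAbs.inducts)
  case (alpha_Op inp inp' binp binp' d)
  show ?case unfolding qSwap.simps
  proof (rule alpha_alphaAbs.alpha_Op)
    show "\<forall>i X X'. map_option (qSwap zs a b) (inp i) = Some X \<and> map_option (qSwap zs a b) (inp' i) = Some X'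
      \<longrightarrow> alpha X X'"
      using alpha_Op(3) by fastforce
    show "\<forall>i A A'. map_option (qSwapAbs zs a b) (binp i) = Some A \<and> map_option (qSwapAbs zs a b) (binp' i) = Some A'
      \<longrightarrow> alphaAbs A A'"
      using alpha_Op(4) by fastforce
  qed (use alpha_Op(1,2) in simp_all)
next
  case (alphaAbs_Abs y x x' xs X X')
  show ?case unfolding qSwapAbs.simps
  proof (rule alpha_alphaAbs.alphaAbs_Abs[where y = "sw zs a b xs y"])
    show "alpha (qSwap xs (sw zs a b xs y) (sw zs a b xs x) (qSwap zs a b X))
        (qSwap xs (sw zs a b xs y) (sw zs a b xs x') (qSwap zs a b X'))"
      using alphaAbs_Abs(6) by (simp only: qSwap_conj(1)[of zs a b xs y x X] qSwap_conj(1)[of zs a b xs y x' X'])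
  qed (use alphaAbs_Abs in \<open>auto simp: qAFresh_qSwap\<close>)
qed (simp add: alpha_alphaAbs.alpha_Var)

lemma alpha_sym:
  fixes X :: "('index,'bindex,'varSort,'var,'opSym) qTerm"
    and A :: "('index,'bindex,'varSort,'var,'opSym) qAbs"
  shows "alpha X Y \<Longrightarrow> alpha Y X" and "alphaAbs A B \<Longrightarrow> alphaAbs B A"
proof (induct rule: alpha_alphaAbs.inducts)
  case (alpha_Op inp inp' binp binp' d)
  then show ?case by (intro alpha_alphaAbs.alpha_Op) auto
next
  case (alphaAbs_Abs y x x' xs X X')
  then show ?case by (intro alpha_alphaAbs.alphaAbs_Abs) auto
qed (rule alpha_alphaAbs.alpha_Var)

lemma alpha_rename_witness:
  assumes "alpha (qSwap xs y x X) (qSwap xs y x' X')"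
    and "qAFresh xs y X" "qAFresh xs y X'" "qAFresh xs z X" "qAFresh xs z X'"
  shows "alpha (qSwap xs z x X) (qSwap xs z x' X')"
  using alpha_qSwap(1)[OF assms(1), of xs z y] assms(2-) by (simp add: qSwap_qSwap_absent)

lemma alpha_qOp_trans:
  assumes inp: "\<And>i X Y Z. inp i = Some X \<Longrightarrow> alpha X Y \<Longrightarrow> alpha Y Z \<Longrightarrow> alpha X Z"
    and binp: "\<And>i A B C. binp i = Some A \<Longrightarrow> alphaAbs A B \<Longrightarrow> alphaAbs B C \<Longrightarrow> alphaAbs A C"
    and "alpha (qOp d inp binp) Y" "alpha Y Z"
  shows "alpha (qOp d inp binp) Z"
proof -
  from assms(3) obtain inp' binp' where Y: "Y = qOp d inp' binp'"
    and dom1: "\<forall>i. (inp i = None) = (inp' i = None)" "\<forall>i. (binp i = None) = (binp' i = None)"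
    and rel1: "\<forall>i X X'. inp i = Some X \<and> inp' i = Some X' \<longrightarrow> alpha X X'"
      "\<forall>i A A'. binp i = Some A \<and> binp' i = Some A' \<longrightarrow> alphaAbs A A'"
    by (auto elim: alpha_qOpE)
  from assms(4) obtain inp'' binp'' where Z: "Z = qOp d inp'' binp''"
    and dom2: "\<forall>i. (inp' i = None) = (inp'' i = None)" "\<forall>i. (binp' i = None) = (binp'' i = None)"
    and rel2: "\<forall>i X X'. inp' i = Some X \<and> inp'' i = Some X' \<longrightarrow> alpha X X'"
      "\<forall>i A A'. binp' i = Some A \<and> binp'' i = Some A' \<longrightarrow> alphaAbs A A'"
    unfolding Y by (auto elim: alpha_qOpE)
  show ?thesis unfolding Z
  proof (rule alpha_alphaAbs.alpha_Op)
    show "\<forall>i X X''. inp i = Some X \<and> inp'' i = Some X'' \<longrightarrow> alpha X X''"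
    proof (intro allI impI, elim conjE)
      fix i X X'' assume X: "inp i = Some X" "inp'' i = Some X''"
      then obtain X' where "inp' i = Some X'" using dom1(1)[rule_format, of i] by auto
      with X show "alpha X X''" using inp rel1(1) rel2(1) by blast
    qed
    show "\<forall>i A A''. binp i = Some A \<and> binp'' i = Some A'' \<longrightarrow> alphaAbs A A''"
    proof (intro allI impI, elim conjE)
      fix i A A'' assume A: "binp i = Some A" "binp'' i = Some A''"
      then obtain A' where "binp' i = Some A'" using dom1(2)[rule_format, of i] by auto
      with A show "alphaAbs A A''" using binp rel1(2) rel2(2) by blast
    qed
  qed (use dom1 dom2 in auto)
qed

context infinite_regular_var
begin

lemma alpha_refl:
  fixes X :: "('index,'bindex,'varSort,'var,'opSym) qTerm"
    and A :: "('index,'bindex,'varSort,'var,'opSym) qAbs"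
  shows "qGood X \<Longrightarrow> alpha X X" and "qGoodAbs A \<Longrightarrow> alphaAbs A A"
proof (induct X and A rule: qTerm_qAbs_induct)
  case (Op d inp binp)
  then show ?case by (auto simp: pred_option_iff intro!: alpha_alphaAbs.alpha_Op)
next
  case (Abs xs x X)
  obtain y where "y \<notin> {x}" "qAFresh xs y X" using exists_qAFresh[of "{X}" "{x}"] Abs by auto
  with Abs show ?case by (auto intro!: alpha_alphaAbs.alphaAbs_Abs[where y = y] alpha_qSwap)
qed (rule alpha_alphaAbs.alpha_Var)

lemma alpha_trans:
  fixes X :: "('index,'bindex,'varSort,'var,'opSym) qTerm"
    and A :: "('index,'bindex,'varSort,'var,'opSym) qAbs"
  shows "qGood X \<Longrightarrow> alpha X Y \<Longrightarrow> alpha Y Z \<Longrightarrow> alpha X Z"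
    and "qGoodAbs A \<Longrightarrow> alphaAbs A B \<Longrightarrow> alphaAbs B C \<Longrightarrow> alphaAbs A C"
proof (induct X and A arbitrary: Y Z and B C rule: qTerm_qAbs_swap_induct)
  case (Var xs x)
  then show ?case by (auto elim: alpha_qVarE)
next
  case (Op d inp binp)
  note good = qGood_qOpD[OF Op(3)]
  show ?case by (rule alpha_qOp_trans[OF _ _ Op(4,5)]) (use Op(1,2) good(1,2) in blast)+
next
  case (Abs xs x W)
  from Abs(3) obtain y x' W' where B: "B = qAbs xs x' W'"
    and y: "qAFresh xs y W" "qAFresh xs y W'" "alpha (qSwap xs y x W) (qSwap xs y x' W')"
    by (auto elim: alphaAbs_qAbsE)
  from Abs(4) obtain y' x'' W'' where C: "C = qAbs xs x'' W''"
    and y': "qAFresh xs y' W'" "qAFresh xs y' W''" "alpha (qSwap xs y' x' W') (qSwap xs y' x'' W'')"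
    unfolding B by (auto elim: alphaAbs_qAbsE)
  have good: "qGood W" "qGood W'" "qGood W''"
    using Abs(2) alpha_qGood(1)[OF y(3)] alpha_qGood(1)[OF y'(3)] by simp_all
  obtain z where z: "z \<notin> {x, x', x''}" "qAFresh xs z W" "qAFresh xs z W'" "qAFresh xs z W''"
    using exists_qAFresh[of "{W, W', W''}" "{x, x', x''}" xs] good by auto
  have "alpha (qSwap xs z x W) (qSwap xs z x' W')"
    using alpha_rename_witness[OF y(3)] y z by simp
  moreover have "alpha (qSwap xs z x' W') (qSwap xs z x'' W'')"
    using alpha_rename_witness[OF y'(3)] y' z by simp
  ultimately have "alpha (qSwap xs z x W) (qSwap xs z x'' W'')"
    by (rule Abs(1)[of "[(xs, z, x)]", simplified, OF good(1)])
  then show ?case unfolding C using z by (intro alpha_alphaAbs.alphaAbs_Abs[where y = z]) auto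
qed

lemma equivclp_alpha_imp_alpha:
  fixes X :: "('index,'bindex,'varSort,'var,'opSym) qTerm"
  assumes "equivclp alpha X Y" "qGood X"
  shows "alpha X Y"
  using assms(1) unfolding equivclp_def
proof (induct rule: rtranclp_induct)
  case (step Y Z)
  then have "alpha Y Z" using alpha_sym(1) by (auto simp: symclp_def)
  then show ?case using alpha_trans(1)[OF assms(2) step(3)] by blast
qed (rule alpha_refl(1)[OF assms(2)])

lemma equivclp_alphaAbs_imp_alphaAbs:
  fixes A :: "('index,'bindex,'varSort,'var,'opSym) qAbs"
  assumes "equivclp alphaAbs A B" "qGoodAbs A"
  shows "alphaAbs A B"
  using assms(1) unfolding equivclp_def
proof (induct rule: rtranclp_induct)
  case (step B C)
  then have "alphaAbs B C" using alpha_sym(2) by (auto simp: symclp_def)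
  then show ?case using alpha_trans(2)[OF assms(2) step(3)] by blast
qed (rule alpha_refl(2)[OF assms(2)])

lemma alphaAbs_qAbs_cong:
  fixes W :: "('index,'bindex,'varSort,'var,'opSym) qTerm"
  assumes "qGood W" "alpha W W'"
  shows "alphaAbs (qAbs xs x W) (qAbs xs x W')"
proof -
  obtain y where "y \<notin> {x}" "qAFresh xs y W" "qAFresh xs y W'"
    using exists_qAFresh[of "{W, W'}" "{x}" xs] assms alpha_qGood(1) by force
  with assms(2) show ?thesis by (auto intro!: alpha_alphaAbs.alphaAbs_Abs[where y = y] alpha_qSwap)
qed

end

section \<open>Interpreting quasi-terms in an FS model\<close>

locale fs_model = infinite_regular_var "TYPE('var)" +
  fixes VAR :: "'varSort \<Rightarrow> 'var \<Rightarrow> 'T"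
    and OP :: "'opSym \<Rightarrow> ('index \<Rightarrow> 'T option) \<Rightarrow> ('bindex \<Rightarrow> 'A option) \<Rightarrow> 'T"
    and ABS :: "'varSort \<Rightarrow> 'var \<Rightarrow> 'T \<Rightarrow> 'A"
    and FRESH :: "'varSort \<Rightarrow> 'var \<Rightarrow> 'T \<Rightarrow> bool"
    and FRESHABS :: "'varSort \<Rightarrow> 'var \<Rightarrow> 'A \<Rightarrow> bool"
    and SUBST :: "'T \<Rightarrow> 'T \<Rightarrow> 'var \<Rightarrow> 'varSort \<Rightarrow> 'T"
    and SUBSTABS :: "'A \<Rightarrow> 'T \<Rightarrow> 'var \<Rightarrow> 'varSort \<Rightarrow> 'A"
  assumes FRESH_VAR: "(ys, y) \<noteq> (xs, x) \<Longrightarrow> FRESH ys y (VAR xs x)"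
    and FRESH_OP: "|dom inp| <o |UNIV :: 'var set| \<Longrightarrow> |dom binp| <o |UNIV :: 'var set| \<Longrightarrow>
      liftAll (FRESH ys y) inp \<Longrightarrow> liftAll (FRESHABS ys y) binp \<Longrightarrow> FRESH ys y (OP d inp binp)"
    and FRESHABS_ABS: "(ys, y) = (xs, x) \<or> FRESH ys y X \<Longrightarrow> FRESHABS ys y (ABS xs x X)"
    and SUBST_VAR: "SUBST (VAR xs x) Y y ys = (if (xs, x) = (ys, y) then Y else VAR xs x)"
    and SUBST_OP: "|dom inp| <o |UNIV :: 'var set| \<Longrightarrow> |dom binp| <o |UNIV :: 'var set| \<Longrightarrow>
      SUBST (OP d inp binp) Y y ys = OP d (lift (\<lambda>X. SUBST X Y y ys) inp) (lift (\<lambda>A. SUBSTABS A Y y ys) binp)"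
    and SUBSTABS_ABS: "(xs, x) \<noteq> (ys, y) \<Longrightarrow> FRESH xs x Y \<Longrightarrow>
      SUBSTABS (ABS xs x X) Y y ys = ABS xs x (SUBST X Y y ys)"
    and ABS_cong: "y \<notin> {x, x'} \<Longrightarrow> FRESH xs y X \<Longrightarrow> FRESH xs y X' \<Longrightarrow>
      SUBST X (VAR xs y) x xs = SUBST X' (VAR xs y) x' xs \<Longrightarrow> ABS xs x X = ABS xs x' X'"
    and ABS_rename: "FRESH xs y X \<Longrightarrow> ABS xs x X = ABS xs y (SUBST X (VAR xs y) x xs)"

lemma fs_model_axioms_if_FSmodel:
  "FSmodel VAR OP ABS FRESH FRESHABS SUBST SUBSTABS \<Longrightarrow> fs_model_axioms VAR OP ABS FRESH FRESHABS SUBST SUBSTABS"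
  unfolding FSmodel_def fs_model_axioms_def by simp

context fs_model
begin

primrec qInterp :: "('index,'bindex,'varSort,'var,'opSym) qTerm \<Rightarrow> 'T"
  and qInterpAbs :: "('index,'bindex,'varSort,'var,'opSym) qAbs \<Rightarrow> 'A" where
  "qInterp (qVar xs x) = VAR xs x"
| "qInterp (qOp d inp binp) = OP d (\<lambda>i. map_option qInterp (inp i)) (\<lambda>i. map_option qInterpAbs (binp i))"
| "qInterpAbs (qAbs xs x X) = ABS xs x (qInterp X)"

lemma SUBST_OP_map:
  "|dom inp| <o |UNIV :: 'var set| \<Longrightarrow> |dom binp| <o |UNIV :: 'var set| \<Longrightarrow>
   SUBST (OP d (\<lambda>i. map_option F (inp i)) (\<lambda>i. map_option G (binp i))) Y y ys =
   OP d (\<lambda>i. map_option (\<lambda>X. SUBST (F X) Y y ys) (inp i)) (\<lambda>i. map_option (\<lambda>A. SUBSTABS (G A) Y y ys) (binp i))"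
  by (simp add: SUBST_OP lift_def option.map_comp o_def)

lemma FRESH_qInterp:
  fixes X :: "('index,'bindex,'varSort,'var,'opSym) qTerm"
    and A :: "('index,'bindex,'varSort,'var,'opSym) qAbs"
  shows "qGood X \<Longrightarrow> qFresh xs x X \<Longrightarrow> FRESH xs x (qInterp X)"
    and "qGoodAbs A \<Longrightarrow> qFreshAbs xs x A \<Longrightarrow> FRESHABS xs x (qInterpAbs A)"
proof (induct X and A rule: qTerm_qAbs_induct)
  case (Op d inp binp)
  note good = qGood_qOpD[OF Op(3)]
  show ?case unfolding qInterp.simps
    by (rule FRESH_OP) (use Op good in \<open>auto simp: liftAll_def pred_option_iff\<close>)
qed (auto intro: FRESH_VAR FRESHABS_ABS)

lemma FRESH_qInterp_if_qAFresh: "qGood X \<Longrightarrow> qAFresh xs x X \<Longrightarrow> FRESH xs x (qInterp X)"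
  by (rule FRESH_qInterp(1)[OF _ qAFresh_imp_qFresh(1)])

lemma SUBST_VAR_qInterp_absent:
  fixes Z :: "('index,'bindex,'varSort,'var,'opSym) qTerm"
    and A :: "('index,'bindex,'varSort,'var,'opSym) qAbs"
  shows "qGood Z \<Longrightarrow> qAFresh xs x Z \<Longrightarrow> qAFresh xs y Z \<Longrightarrow> SUBST (qInterp Z) (VAR xs y) x xs = qInterp Z"
    and "qGoodAbs A \<Longrightarrow> qAFreshAbs xs x A \<Longrightarrow> qAFreshAbs xs y A \<Longrightarrow>
      SUBSTABS (qInterpAbs A) (VAR xs y) x xs = qInterpAbs A"
proof (induct Z and A rule: qTerm_qAbs_induct)
  case (Op d inp binp)
  note good = qGood_qOpD[OF Op(3)]
  show ?case unfolding qInterp.simps SUBST_OP_map[OF good(3,4)]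
    by (intro arg_cong2[where f = "OP d"] ext map_option_cong_Some)
       (use Op good in \<open>auto simp: pred_option_iff\<close>)
qed (auto simp: SUBST_VAR SUBSTABS_ABS FRESH_VAR)

lemma qInterp_qSwap:
  fixes X :: "('index,'bindex,'varSort,'var,'opSym) qTerm"
    and A :: "('index,'bindex,'varSort,'var,'opSym) qAbs"
  shows "qGood X \<Longrightarrow> qAFresh xs y X \<Longrightarrow> qInterp (qSwap xs y x X) = SUBST (qInterp X) (VAR xs y) x xs"
    and "qGoodAbs A \<Longrightarrow> qAFreshAbs xs y A \<Longrightarrow>
      qInterpAbs (qSwapAbs xs y x A) = SUBSTABS (qInterpAbs A) (VAR xs y) x xs"
proof (induct X and A arbitrary: y and y rule: qTerm_qAbs_induct)
  case (Var zs z)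
  then show ?case by (auto simp: SUBST_VAR sw_def)
next
  case (Op d inp binp)
  note good = qGood_qOpD[OF Op(3)]
  show ?case unfolding qInterp.simps SUBST_OP_map[OF good(3,4)] qSwap.simps option.map_comp o_def
    by (intro arg_cong2[where f = "OP d"] ext map_option_cong_Some)
       (use Op good in \<open>auto simp: pred_option_iff\<close>)
next
  case (Abs zs z W)
  then have good: "qGood W" and fresh: "qAFresh xs y W" "(xs, y) \<noteq> (zs, z)" by auto
  have IH: "qInterp (qSwap xs y x W) = SUBST (qInterp W) (VAR xs y) x xs"
    using Abs(1) good fresh by blast
  show ?case
  proof (cases "(zs, z) = (xs, x)")
    case True
    then have zs: "zs = xs" "z = x" and "y \<noteq> x" using fresh by auto
    obtain u where u: "u \<notin> {x, y}" "qAFresh xs u W"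
      using exists_qAFresh[of "{W}" "{x, y}" xs] good by auto
    have "ABS xs x (qInterp W) = ABS xs u (qInterp (qSwap xs u x W))"
      using ABS_rename[OF FRESH_qInterp_if_qAFresh[OF good u(2)]] Abs(1)[OF good u(2)] by simp
    moreover have "SUBST (qInterp (qSwap xs u x W)) (VAR xs y) x xs = qInterp (qSwap xs u x W)"
      by (rule SUBST_VAR_qInterp_absent(1)) (use good u fresh \<open>y \<noteq> x\<close> in \<open>auto simp: qAFresh_qSwap sw_def\<close>)
    ultimately have "SUBSTABS (ABS xs x (qInterp W)) (VAR xs y) x xs = ABS xs x (qInterp W)"
      using u by (simp add: SUBSTABS_ABS FRESH_VAR)
    then show ?thesis
      using ABS_rename[OF FRESH_qInterp_if_qAFresh[OF good fresh(1)], of x] by (simp add: zs IH)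
  next
    case False
    then have "sw xs y x zs z = z" using fresh by (auto simp: sw_def)
    moreover have "SUBSTABS (ABS zs z (qInterp W)) (VAR xs y) x xs = ABS zs z (SUBST (qInterp W) (VAR xs y) x xs)"
      using False fresh by (intro SUBSTABS_ABS FRESH_VAR) auto
    ultimately show ?thesis by (simp add: IH)
  qed
qed

lemma qInterp_alpha:
  fixes X :: "('index,'bindex,'varSort,'var,'opSym) qTerm"
    and A :: "('index,'bindex,'varSort,'var,'opSym) qAbs"
  shows "alpha X Y \<Longrightarrow> qGood X \<Longrightarrow> qInterp X = qInterp Y"
    and "alphaAbs A B \<Longrightarrow> qGoodAbs A \<Longrightarrow> qInterpAbs A = qInterpAbs B"
proof (induct rule: alpha_alphaAbs.inducts)
  case (alpha_Op inp inp' binp binp' d)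
  note good = qGood_qOpD[OF alpha_Op(5)]
  have "map_option qInterp (inp i) = map_option qInterp (inp' i)" for i
    using alpha_Op(1,3) good(1) by (intro map_option_eqI) auto
  moreover have "map_option qInterpAbs (binp j) = map_option qInterpAbs (binp' j)" for j
    using alpha_Op(2,4) good(2) by (intro map_option_eqI) auto
  ultimately show ?case by simp
next
  case (alphaAbs_Abs y x x' xs X X')
  then have good: "qGood X" "qGood X'" using alpha_qGood(1)[OF alphaAbs_Abs(5)] by simp_all
  have "SUBST (qInterp X) (VAR xs y) x xs = SUBST (qInterp X') (VAR xs y) x' xs"
    using alphaAbs_Abs good by (simp flip: qInterp_qSwap)
  then show ?case
    using ABS_cong alphaAbs_Abs(1-4) FRESH_qInterp_if_qAFresh good by simp
qed simp

lemma SUBST_qInterp_absent: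
  fixes X :: "('index,'bindex,'varSort,'var,'opSym) qTerm"
    and A :: "('index,'bindex,'varSort,'var,'opSym) qAbs"
  shows "qGood X \<Longrightarrow> qGood Y \<Longrightarrow> qAFresh zs z X \<Longrightarrow> SUBST (qInterp X) (qInterp Y) z zs = qInterp X"
    and "qGoodAbs A \<Longrightarrow> qGood Y \<Longrightarrow> qAFreshAbs zs z A \<Longrightarrow>
      SUBSTABS (qInterpAbs A) (qInterp Y) z zs = qInterpAbs A"
proof (induct X and A arbitrary: zs z and zs z rule: qTerm_qAbs_swap_induct)
  case (Var xs x)
  then show ?case by (auto simp: SUBST_VAR)
next
  case (Op d inp binp)
  note good = qGood_qOpD[OF Op(3)]
  show ?case unfolding qInterp.simps SUBST_OP_map[OF good(3,4)]
    by (intro arg_cong2[where f = "OP d"] ext map_option_cong_Some)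
       (use Op good in \<open>auto simp: pred_option_iff\<close>)
next
  case (Abs ws w W)
  then have good: "qGood W" and fresh: "(zs, z) \<noteq> (ws, w)" "qAFresh zs z W" by auto
  obtain u where u: "u \<notin> {w, z}" "qAFresh ws u W" "qAFresh ws u Y"
    using exists_qAFresh[of "{W, Y}" "{w, z}" ws] good Abs(3) by auto
  have rename: "ABS ws w (qInterp W) = ABS ws u (qInterp (qSwap ws u w W))"
    using ABS_rename[OF FRESH_qInterp_if_qAFresh[OF good u(2)], of w] qInterp_qSwap(1)[OF good u(2)] by simp
  have "qAFresh zs z (qSwap ws u w W)"
    using fresh u by (auto simp: qAFresh_qSwap sw_def)
  then have "SUBST (qInterp (qSwap ws u w W)) (qInterp Y) z zs = qInterp (qSwap ws u w W)"
    using Abs(1)[of "[(ws, u, w)]"] good Abs(3) by simp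
  then show ?case
    using u fresh by (simp add: rename SUBSTABS_ABS FRESH_qInterp_if_qAFresh[OF Abs(3)])
qed

end

section \<open>Parallel substitution\<close>

definition env_supp :: "('varSort \<Rightarrow> 'var \<Rightarrow> 'x option) \<Rightarrow> ('varSort \<times> 'var) set" where
  "env_supp \<sigma> = {(vs, v). \<sigma> vs v \<noteq> None}"

definition good_env :: "('varSort \<Rightarrow> 'var \<Rightarrow> ('index,'bindex,'varSort,'var,'opSym) qTerm option) \<Rightarrow> bool" where
  "good_env \<sigma> \<longleftrightarrow> finite (env_supp \<sigma>) \<and> (\<forall>vs v S. \<sigma> vs v = Some S \<longrightarrow> qGood S)"

definition env_avoids :: "'varSort \<Rightarrow> 'var \<Rightarrow> ('varSort \<Rightarrow> 'var \<Rightarrow> ('index,'bindex,'varSort,'var,'opSym) qTerm option) \<Rightarrow> bool" where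
  "env_avoids ws u \<sigma> \<longleftrightarrow> (\<forall>vs v S. \<sigma> vs v = Some S \<longrightarrow> qAFresh ws u S)"

definition env_upd where
  "env_upd \<sigma> ws w t = \<sigma>(ws := (\<sigma> ws)(w := Some t))"

definition env_repl where
  "env_repl \<sigma> as a T = (\<lambda>vs v. map_option (\<lambda>S. if S = qVar as a then T else S) (\<sigma> vs v))"

text \<open>If \<open>\<sigma>\<close> is a renaming, \<open>env_then_subst \<sigma> ys y T\<close> is \<open>\<sigma>\<close> followed by the substitution \<open>[T/y]\<^sub>y\<^sub>s\<close>.\<close>

definition env_then_subst where
  "env_then_subst \<sigma> ys y T = (\<lambda>vs v. case \<sigma> vs v of
     None \<Rightarrow> (if (vs, v) = (ys, y) then Some T else None)
   | Some S \<Rightarrow> Some (if S = qVar ys y then T else S))"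

lemma env_upd_apply: "env_upd \<sigma> ws w t vs v = (if (vs, v) = (ws, w) then Some t else \<sigma> vs v)"
  by (auto simp: env_upd_def)

lemma good_env_empty: "good_env (\<lambda>_ _. None)"
  by (simp add: good_env_def env_supp_def)

lemma good_env_upd: "good_env \<sigma> \<Longrightarrow> qGood t \<Longrightarrow> good_env (env_upd \<sigma> ws w t)"
proof -
  assume "good_env \<sigma>" "qGood t"
  moreover have "env_supp (env_upd \<sigma> ws w t) \<subseteq> insert (ws, w) (env_supp \<sigma>)"
    by (auto simp: env_supp_def env_upd_apply)
  ultimately show ?thesis by (auto simp: good_env_def env_upd_apply intro: finite_subset split: if_splits)
qed

lemma good_env_repl: "good_env \<sigma> \<Longrightarrow> qGood T \<Longrightarrow> good_env (env_repl \<sigma> as a T)"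
  by (auto simp: good_env_def env_supp_def env_repl_def)

lemma good_env_then_subst: "good_env \<sigma> \<Longrightarrow> qGood T \<Longrightarrow> good_env (env_then_subst \<sigma> ys y T)"
proof -
  assume "good_env \<sigma>" "qGood T"
  moreover have "env_supp (env_then_subst \<sigma> ys y T) \<subseteq> insert (ys, y) (env_supp \<sigma>)"
    by (auto simp: env_supp_def env_then_subst_def split: option.splits)
  ultimately show ?thesis
    by (auto simp: good_env_def env_then_subst_def intro: finite_subset split: if_splits option.splits)
qed

lemma env_avoids_not_var: "env_avoids ws u \<sigma> \<Longrightarrow> \<sigma> vs v \<noteq> Some (qVar ws u)"
  unfolding env_avoids_def by force

lemma env_then_subst_empty: "env_then_subst (\<lambda>_ _. None) ys y Y = (\<lambda>_ _. None)(ys := (\<lambda>_. None)(y := Some Y))"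
  by (auto simp: env_then_subst_def fun_eq_iff)

lemma qSubst_eq_qPsubst: "qSubst X Y y ys = qPsubst (env_then_subst (\<lambda>_ _. None) ys y Y) X"
  and qSubstAbs_eq_qPsubstAbs: "qSubstAbs A Y y ys = qPsubstAbs (env_then_subst (\<lambda>_ _. None) ys y Y) A"
  by (simp_all add: qSubst_def qSubstAbs_def env_then_subst_empty)

lemma qFresh_qPsubst:
  fixes W :: "('index,'bindex,'varSort,'var,'opSym) qTerm"
    and A :: "('index,'bindex,'varSort,'var,'opSym) qAbs"
  shows "(\<And>ts t. \<not> qFresh ts t W \<Longrightarrow> qFresh xs v (case \<sigma> ts t of None \<Rightarrow> qVar ts t | Some S \<Rightarrow> S))
      \<Longrightarrow> qFresh xs v (qPsubst \<sigma> W)"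
    and "(\<And>ts t. \<not> qFreshAbs ts t A \<Longrightarrow> qFresh xs v (case \<sigma> ts t of None \<Rightarrow> qVar ts t | Some S \<Rightarrow> S))
      \<Longrightarrow> qFreshAbs xs v (qPsubstAbs \<sigma> A)"
proof (induct W and A arbitrary: \<sigma> and \<sigma> rule: qTerm_qAbs_induct)
  case (Var zs z)
  then show ?case by (cases "\<sigma> zs z") auto
next
  case (Op d inp binp)
  have "qFresh xs v (qPsubst \<sigma> X)" if "inp i = Some X" for i X
    by (rule Op(1)[OF that]) (use Op(3) that in \<open>auto simp: pred_option_iff\<close>)
  moreover have "qFreshAbs xs v (qPsubstAbs \<sigma> A)" if "binp i = Some A" for i A
    by (rule Op(2)[OF that], rule Op(3)) (use that in \<open>auto simp: pred_option_iff\<close>)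
  ultimately show ?case by (auto simp: pred_option_iff)
next
  case (Abs ws w W)
  define w1 where "w1 = (SOME x'. qAFresh ws x' W \<and> (\<forall>zs z Z. \<sigma> zs z = Some Z \<longrightarrow> qAFresh ws x' Z))"
  have e: "qPsubstAbs \<sigma> (qAbs ws w W) = qAbs ws w1 (qPsubst (env_upd \<sigma> ws w (qVar ws w1)) W)"
    by (simp add: w1_def env_upd_def Let_def)
  show ?case
  proof (cases "(xs, v) = (ws, w1)")
    case False
    have "qFresh xs v (qPsubst (env_upd \<sigma> ws w (qVar ws w1)) W)"
      by (rule Abs(1)) (use Abs(2) False in \<open>auto simp: env_upd_apply\<close>)
    then show ?thesis unfolding e by simp
  qed (unfold e, simp)
qed

context infinite_regular_var
begin

lemma exists_env_avoids:
  fixes X T :: "('index,'bindex,'varSort,'var,'opSym) qTerm"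
    and \<sigma> :: "'varSort \<Rightarrow> 'var \<Rightarrow> ('index,'bindex,'varSort,'var,'opSym) qTerm option"
  assumes "good_env \<sigma>" "qGood X" "qGood T" "finite F"
  shows "\<exists>u. u \<notin> F \<and> qAFresh ws u X \<and> qAFresh ws u T \<and> env_avoids ws u \<sigma>"
proof -
  let ?R = "{S. \<exists>vs v. \<sigma> vs v = Some S}"
  have "?R \<subseteq> (\<lambda>(vs, v). the (\<sigma> vs v)) ` env_supp \<sigma>"
    by (force simp: env_supp_def)
  then have "finite ?R"
    using assms(1) by (auto simp: good_env_def intro: finite_surj)
  then obtain u where "u \<notin> F" "\<forall>S\<in>insert X (insert T ?R). qAFresh ws u S"
    using exists_qAFresh[of "insert X (insert T ?R)" F ws] assms by (auto simp: good_env_def)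
  then show ?thesis by (auto simp: env_avoids_def)
qed

lemma qPsubstAbs_qAbs:
  fixes X :: "('index,'bindex,'varSort,'var,'opSym) qTerm"
  assumes "good_env \<sigma>" "qGood X"
  obtains w1 where "qPsubstAbs \<sigma> (qAbs ws w X) = qAbs ws w1 (qPsubst (env_upd \<sigma> ws w (qVar ws w1)) X)"
    and "qAFresh ws w1 X" "env_avoids ws w1 \<sigma>"
proof -
  define P where "P = (\<lambda>x'. qAFresh ws x' X \<and> (\<forall>zs z Z. \<sigma> zs z = Some Z \<longrightarrow> qAFresh ws x' Z))"
  have "\<exists>x'. P x'"
    using exists_env_avoids[OF assms assms(2), of "{}" ws] by (auto simp: P_def env_avoids_def)
  then have "P (SOME x'. P x')" by (rule someI_ex)
  then show ?thesis using that unfolding P_def by (auto simp: Let_def env_upd_def env_avoids_def)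
qed

lemma qGood_qPsubst:
  fixes X :: "('index,'bindex,'varSort,'var,'opSym) qTerm"
    and A :: "('index,'bindex,'varSort,'var,'opSym) qAbs"
  shows "qGood X \<Longrightarrow> good_env \<sigma> \<Longrightarrow> qGood (qPsubst \<sigma> X)"
    and "qGoodAbs A \<Longrightarrow> good_env \<sigma> \<Longrightarrow> qGoodAbs (qPsubstAbs \<sigma> A)"
proof (induct X and A arbitrary: \<sigma> and \<sigma> rule: qTerm_qAbs_induct)
  case (Var xs x)
  then show ?case by (cases "\<sigma> xs x") (auto simp: good_env_def)
next
  case (Op d inp binp)
  note good = qGood_qOpD[OF Op(3)]
  have "pred_option qGood (map_option (qPsubst \<sigma>) (inp i))" for i
    using Op(1)[of i] good(1)[of i] Op(4) by (cases "inp i") auto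
  moreover have "pred_option qGoodAbs (map_option (qPsubstAbs \<sigma>) (binp j))" for j
    using Op(2)[of j] good(2)[of j] Op(4) by (cases "binp j") auto
  ultimately show ?case using good(3,4) by simp
next
  case (Abs xs x X)
  then have "qGood X" by simp
  with Abs(3) obtain w1 where "qPsubstAbs \<sigma> (qAbs xs x X) = qAbs xs w1 (qPsubst (env_upd \<sigma> xs x (qVar xs w1)) X)"
    by (rule qPsubstAbs_qAbs)
  then show ?case using Abs(1) \<open>qGood X\<close> good_env_upd[OF Abs(3)] by simp
qed

lemma qGood_qSubst:
  fixes X Y :: "('index,'bindex,'varSort,'var,'opSym) qTerm"
    and A :: "('index,'bindex,'varSort,'var,'opSym) qAbs"
  shows "qGood X \<Longrightarrow> qGood Y \<Longrightarrow> qGood (qSubst X Y y ys)"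
    and "qGoodAbs A \<Longrightarrow> qGood Y \<Longrightarrow> qGoodAbs (qSubstAbs A Y y ys)"
  by (simp_all add: qSubst_eq_qPsubst qSubstAbs_eq_qPsubstAbs qGood_qPsubst good_env_then_subst good_env_empty)

end

context fs_model
begin

text \<open>The hypothesis on \<open>\<sigma>\<close> says that \<open>a\<close> occurs in the range of \<open>\<sigma>\<close> only as the whole term \<open>qVar as a\<close>.\<close>

abbreviation SUBST_qPsubst_commute :: "('index,'bindex,'varSort,'var,'opSym) qTerm \<Rightarrow> bool" where
  "SUBST_qPsubst_commute W \<equiv> \<forall>\<sigma> T as a. good_env \<sigma> \<longrightarrow> qGood T \<longrightarrow> qAFresh as a W \<longrightarrow>
     (\<forall>vs v S. \<sigma> vs v = Some S \<longrightarrow> S = qVar as a \<or> qAFresh as a S) \<longrightarrow>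
     SUBST (qInterp (qPsubst \<sigma> W)) (qInterp T) a as = qInterp (qPsubst (env_repl \<sigma> as a T) W)"

text \<open>The interpretation of \<open>qPsubstAbs\<close> does not depend on which fresh variable it chooses for the
  bound one: renaming \<open>w1\<close> to \<open>v\<close> by \<open>ABS_rename\<close> and pushing the substitution into \<open>qPsubst\<close> turns
  one side into the other.\<close>

lemma ABS_qInterp_qPsubst_rename:
  fixes W :: "('index,'bindex,'varSort,'var,'opSym) qTerm"
  assumes commute: "SUBST_qPsubst_commute W" and good: "qGood W" "good_env \<sigma>"
    and w1: "qAFresh ws w1 W" "env_avoids ws w1 \<sigma>"
    and v: "qAFresh ws v W" "env_avoids ws v \<sigma>"
  shows "ABS ws w1 (qInterp (qPsubst (env_upd \<sigma> ws w (qVar ws w1)) W)) =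
    ABS ws v (qInterp (qPsubst (env_upd \<sigma> ws w (qVar ws v)) W))"
proof (cases "w1 = v")
  case False
  define \<sigma>1 where "\<sigma>1 = env_upd \<sigma> ws w (qVar ws w1)"
  have good1: "good_env \<sigma>1" using good_env_upd[OF good(2)] by (simp add: \<sigma>1_def)
  have "qFresh ws v (qPsubst \<sigma>1 W)"
  proof (rule qFresh_qPsubst(1))
    fix ts t assume "\<not> qFresh ts t W"
    then have "(ts, t) \<noteq> (ws, v)" using v(1) by (auto dest: qAFresh_imp_qFresh(1))
    show "qFresh ws v (case \<sigma>1 ts t of None \<Rightarrow> qVar ts t | Some S \<Rightarrow> S)"
    proof (cases "\<sigma>1 ts t")
      case (Some S)
      then have "S = qVar ws w1 \<or> qAFresh ws v S"
        using v(2) by (auto simp: \<sigma>1_def env_upd_apply env_avoids_def split: if_splits)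
      then show ?thesis using Some False by (auto dest: qAFresh_imp_qFresh(1))
    qed (use \<open>(ts, t) \<noteq> (ws, v)\<close> in auto)
  qed
  then have "ABS ws w1 (qInterp (qPsubst \<sigma>1 W)) = ABS ws v (SUBST (qInterp (qPsubst \<sigma>1 W)) (VAR ws v) w1 ws)"
    by (intro ABS_rename FRESH_qInterp(1) qGood_qPsubst(1)[OF good(1) good1])
  moreover have "SUBST (qInterp (qPsubst \<sigma>1 W)) (qInterp (qVar ws v)) w1 ws = qInterp (qPsubst (env_repl \<sigma>1 ws w1 (qVar ws v)) W)"
    by (rule commute[rule_format, OF good1]) (use w1 in \<open>auto simp: \<sigma>1_def env_upd_apply env_avoids_def split: if_splits\<close>)
  moreover have "env_repl \<sigma>1 ws w1 (qVar ws v) = env_upd \<sigma> ws w (qVar ws v)"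
    using env_avoids_not_var[OF w1(2)]
    by (auto simp: \<sigma>1_def env_repl_def env_upd_apply fun_eq_iff intro!: map_option_idI)
  ultimately show ?thesis by (simp add: \<sigma>1_def)
qed simp

lemma SUBSTABS_qInterpAbs_qPsubstAbs:
  fixes W T :: "('index,'bindex,'varSort,'var,'opSym) qTerm"
  assumes commute: "SUBST_qPsubst_commute W"
    and good: "qGood W" "qGood T" "good_env \<sigma>" "good_env \<rho>"
    and v: "qAFresh ws v W" "qAFresh ws v T" "env_avoids ws v \<sigma>" "env_avoids ws v \<rho>" "(ws, v) \<noteq> (as, a)"
    and body: "SUBST (qInterp (qPsubst (env_upd \<sigma> ws w (qVar ws v)) W)) (qInterp T) a as =
      qInterp (qPsubst (env_upd \<rho> ws w (qVar ws v)) W)"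
  shows "SUBSTABS (qInterpAbs (qPsubstAbs \<sigma> (qAbs ws w W))) (qInterp T) a as =
    qInterpAbs (qPsubstAbs \<rho> (qAbs ws w W))"
proof -
  obtain w1 where w1: "qPsubstAbs \<sigma> (qAbs ws w W) = qAbs ws w1 (qPsubst (env_upd \<sigma> ws w (qVar ws w1)) W)"
    "qAFresh ws w1 W" "env_avoids ws w1 \<sigma>"
    using qPsubstAbs_qAbs[OF good(3,1)] by blast
  obtain w2 where w2: "qPsubstAbs \<rho> (qAbs ws w W) = qAbs ws w2 (qPsubst (env_upd \<rho> ws w (qVar ws w2)) W)"
    "qAFresh ws w2 W" "env_avoids ws w2 \<rho>"
    using qPsubstAbs_qAbs[OF good(4,1)] by blast
  have "qInterpAbs (qPsubstAbs \<sigma> (qAbs ws w W)) = ABS ws v (qInterp (qPsubst (env_upd \<sigma> ws w (qVar ws v)) W))"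
    unfolding w1(1) qInterpAbs.simps by (rule ABS_qInterp_qPsubst_rename[OF commute good(1,3) w1(2,3) v(1,3)])
  moreover have "qInterpAbs (qPsubstAbs \<rho> (qAbs ws w W)) = ABS ws v (qInterp (qPsubst (env_upd \<rho> ws w (qVar ws v)) W))"
    unfolding w2(1) qInterpAbs.simps by (rule ABS_qInterp_qPsubst_rename[OF commute good(1,4) w2(2,3) v(1,4)])
  moreover have "SUBSTABS (ABS ws v X) (qInterp T) a as = ABS ws v (SUBST X (qInterp T) a as)" for X
    using v(5) FRESH_qInterp_if_qAFresh[OF good(2) v(2)] by (intro SUBSTABS_ABS) auto
  ultimately show ?thesis using body by simp
qed

lemma SUBST_qInterp_qPsubst:
  fixes W :: "('index,'bindex,'varSort,'var,'opSym) qTerm"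
    and B :: "('index,'bindex,'varSort,'var,'opSym) qAbs"
  shows "qGood W \<Longrightarrow> good_env \<sigma> \<Longrightarrow> qGood T \<Longrightarrow> qAFresh as a W \<Longrightarrow>
      (\<forall>vs v S. \<sigma> vs v = Some S \<longrightarrow> S = qVar as a \<or> qAFresh as a S) \<Longrightarrow>
      SUBST (qInterp (qPsubst \<sigma> W)) (qInterp T) a as = qInterp (qPsubst (env_repl \<sigma> as a T) W)"
    and "qGoodAbs B \<Longrightarrow> good_env \<sigma> \<Longrightarrow> qGood T \<Longrightarrow> qAFreshAbs as a B \<Longrightarrow>
      (\<forall>vs v S. \<sigma> vs v = Some S \<longrightarrow> S = qVar as a \<or> qAFresh as a S) \<Longrightarrow>
      SUBSTABS (qInterpAbs (qPsubstAbs \<sigma> B)) (qInterp T) a as = qInterpAbs (qPsubstAbs (env_repl \<sigma> as a T) B)"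
proof (induct W and B arbitrary: \<sigma> T as a and \<sigma> T as a rule: qTerm_qAbs_induct)
  case (Var vs v)
  show ?case
  proof (cases "\<sigma> vs v")
    case (Some S)
    then have "qGood S" "S = qVar as a \<or> qAFresh as a S" using Var(2,5) by (auto simp: good_env_def)
    then show ?thesis
      using Some SUBST_qInterp_absent(1)[OF _ Var(3)] by (auto simp: SUBST_VAR env_repl_def)
  qed (use Var(4) in \<open>auto simp: SUBST_VAR env_repl_def\<close>)
next
  case (Op d inp binp)
  note good = qGood_qOpD[OF Op(3)]
  show ?case
    unfolding qPsubst.simps qInterp.simps option.map_comp o_def
    unfolding SUBST_OP_map[OF good(3,4)]
    by (intro arg_cong2[where f = "OP d"] ext map_option_cong_Some)
       (use Op good(1,2) in \<open>auto simp: pred_option_iff\<close>)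
next
  case (Abs ws w W)
  then have good: "qGood W" and fresh: "qAFresh as a W" "(as, a) \<noteq> (ws, w)" by auto
  have commute: "SUBST_qPsubst_commute W" using Abs(1) good by blast
  obtain v where v: "v \<notin> {a}" "qAFresh ws v W" "qAFresh ws v T" "env_avoids ws v \<sigma>"
    using exists_env_avoids[OF Abs(3) good Abs(4), of "{a}" ws] by blast
  have "env_repl (env_upd \<sigma> ws w (qVar ws v)) as a T = env_upd (env_repl \<sigma> as a T) ws w (qVar ws v)"
    using v(1) by (auto simp: env_repl_def env_upd_apply fun_eq_iff)
  moreover have "good_env (env_upd \<sigma> ws w (qVar ws v))"
    using good_env_upd[OF Abs(3)] by simp
  then have "SUBST (qInterp (qPsubst (env_upd \<sigma> ws w (qVar ws v)) W)) (qInterp T) a as =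
    qInterp (qPsubst (env_repl (env_upd \<sigma> ws w (qVar ws v)) as a T) W)"
    by (rule Abs(1)[OF good _ Abs(4) fresh(1)]) (use Abs(6) v(1) in \<open>auto simp: env_upd_apply\<close>)
  moreover have "env_avoids ws v (env_repl \<sigma> as a T)"
    using v by (auto simp: env_avoids_def env_repl_def)
  ultimately show ?case
    using v fresh by (intro SUBSTABS_qInterpAbs_qPsubstAbs[OF commute good Abs(4,3) good_env_repl[OF Abs(3,4)]]) auto
qed

lemma qInterp_qPsubst_then_subst:
  fixes X T :: "('index,'bindex,'varSort,'var,'opSym) qTerm"
    and B :: "('index,'bindex,'varSort,'var,'opSym) qAbs"
  shows "qGood X \<Longrightarrow> good_env \<sigma> \<Longrightarrow> (\<forall>vs v S. \<sigma> vs v = Some S \<longrightarrow> (\<exists>s u. S = qVar s u)) \<Longrightarrow> qGood T \<Longrightarrow>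
      SUBST (qInterp (qPsubst \<sigma> X)) (qInterp T) y ys = qInterp (qPsubst (env_then_subst \<sigma> ys y T) X)"
    and "qGoodAbs B \<Longrightarrow> good_env \<sigma> \<Longrightarrow> (\<forall>vs v S. \<sigma> vs v = Some S \<longrightarrow> (\<exists>s u. S = qVar s u)) \<Longrightarrow> qGood T \<Longrightarrow>
      SUBSTABS (qInterpAbs (qPsubstAbs \<sigma> B)) (qInterp T) y ys = qInterpAbs (qPsubstAbs (env_then_subst \<sigma> ys y T) B)"
proof (induct X and B arbitrary: \<sigma> and \<sigma> rule: qTerm_qAbs_induct)
  case (Var vs v)
  show ?case
  proof (cases "\<sigma> vs v")
    case (Some S)
    with Var(3) obtain s u where "S = qVar s u" by blast
    with Some show ?thesis by (auto simp: SUBST_VAR env_then_subst_def)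
  qed (auto simp: SUBST_VAR env_then_subst_def)
next
  case (Op d inp binp)
  note good = qGood_qOpD[OF Op(3)]
  show ?case
    unfolding qPsubst.simps qInterp.simps option.map_comp o_def
    unfolding SUBST_OP_map[OF good(3,4)]
    by (intro arg_cong2[where f = "OP d"] ext map_option_cong_Some)
       (use Op good(1,2) in \<open>auto simp: pred_option_iff\<close>)
next
  case (Abs ws w W)
  then have good: "qGood W" by simp
  have commute: "SUBST_qPsubst_commute W" using SUBST_qInterp_qPsubst(1)[OF good] by blast
  obtain v where v: "v \<notin> {y}" "qAFresh ws v W" "qAFresh ws v T" "env_avoids ws v \<sigma>"
    using exists_env_avoids[OF Abs(3) good Abs(5), of "{y}" ws] by blast
  have "good_env (env_upd \<sigma> ws w (qVar ws v))"
    using good_env_upd[OF Abs(3)] by simp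
  then have "SUBST (qInterp (qPsubst (env_upd \<sigma> ws w (qVar ws v)) W)) (qInterp T) y ys =
    qInterp (qPsubst (env_then_subst (env_upd \<sigma> ws w (qVar ws v)) ys y T) W)"
    by (rule Abs(1)[OF good _ _ Abs(5)]) (use Abs(4) in \<open>auto simp: env_upd_apply\<close>)
  moreover have "env_then_subst (env_upd \<sigma> ws w (qVar ws v)) ys y T = env_upd (env_then_subst \<sigma> ys y T) ws w (qVar ws v)"
    using v(1) by (auto simp: env_then_subst_def env_upd_apply fun_eq_iff)
  moreover have "env_avoids ws v (env_then_subst \<sigma> ys y T)"
    using v(3,4) by (auto simp: env_avoids_def env_then_subst_def split: option.splits if_splits)
  ultimately show ?case
    using v by (intro SUBSTABS_qInterpAbs_qPsubstAbs[OF commute good Abs(5,3) good_env_then_subst[OF Abs(3,5)]]) auto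
qed

lemma qInterp_qPsubst_empty:
  fixes X :: "('index,'bindex,'varSort,'var,'opSym) qTerm"
    and B :: "('index,'bindex,'varSort,'var,'opSym) qAbs"
  shows "qGood X \<Longrightarrow> qInterp (qPsubst (\<lambda>_ _. None) X) = qInterp X"
    and "qGoodAbs B \<Longrightarrow> qInterpAbs (qPsubstAbs (\<lambda>_ _. None) B) = qInterpAbs B"
proof (induct X and B rule: qTerm_qAbs_induct)
  case (Op d inp binp)
  show ?case
    unfolding qPsubst.simps qInterp.simps option.map_comp o_def
    by (intro arg_cong2[where f = "OP d"] ext map_option_cong_Some)
       (use Op in \<open>auto simp: pred_option_iff\<close>)
next
  case (Abs ws w W)
  then have good: "qGood W" by simp
  obtain w1 where w1: "qPsubstAbs (\<lambda>_ _. None) (qAbs ws w W) = qAbs ws w1 (qPsubst (env_upd (\<lambda>_ _. None) ws w (qVar ws w1)) W)"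
    "qAFresh ws w1 W"
    using qPsubstAbs_qAbs[OF good_env_empty good] by blast
  have env: "env_upd (\<lambda>_ _. None) ws w (qVar ws w1) = env_then_subst (\<lambda>_ _. None) ws w (qVar ws w1)"
    by (auto simp: env_then_subst_def env_upd_apply fun_eq_iff)
  have "qInterp (qPsubst (env_upd (\<lambda>_ _. None) ws w (qVar ws w1)) W) = SUBST (qInterp W) (VAR ws w1) w ws"
    unfolding env using qInterp_qPsubst_then_subst(1)[OF good good_env_empty, of "qVar ws w1" w ws] Abs(1)[OF good]
    by simp
  then show ?case
    unfolding w1(1) qInterpAbs.simps using ABS_rename[OF FRESH_qInterp_if_qAFresh[OF good w1(2)]] by simp
qed simp

lemma qInterp_qSubst:
  fixes X Y :: "('index,'bindex,'varSort,'var,'opSym) qTerm"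
    and A :: "('index,'bindex,'varSort,'var,'opSym) qAbs"
  shows "qGood X \<Longrightarrow> qGood Y \<Longrightarrow> qInterp (qSubst X Y y ys) = SUBST (qInterp X) (qInterp Y) y ys"
    and "qGoodAbs A \<Longrightarrow> qGood Y \<Longrightarrow> qInterpAbs (qSubstAbs A Y y ys) = SUBSTABS (qInterpAbs A) (qInterp Y) y ys"
proof -
  show "qInterp (qSubst X Y y ys) = SUBST (qInterp X) (qInterp Y) y ys" if "qGood X" "qGood Y"
    using qInterp_qPsubst_then_subst(1)[OF that(1) good_env_empty _ that(2), of y ys]
    by (simp add: qSubst_eq_qPsubst qInterp_qPsubst_empty(1)[OF that(1)])
  show "qInterpAbs (qSubstAbs A Y y ys) = SUBSTABS (qInterpAbs A) (qInterp Y) y ys" if "qGoodAbs A" "qGood Y"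
    using qInterp_qPsubst_then_subst(2)[OF that(1) good_env_empty _ that(2), of y ys]
    by (simp add: qSubstAbs_eq_qPsubstAbs qInterp_qPsubst_empty(2)[OF that(1)])
qed

end

section \<open>Descent to terms\<close>

context infinite_regular_var
begin

lemma alpha_rep_abs_term:
  fixes X :: "('index,'bindex,'varSort,'var,'opSym) qTerm"
  assumes "qGood X"
  shows "alpha X (rep_term (abs_term X))"
proof -
  have "equivclp alpha (rep_term (abs_term X)) X"
    by (rule Quotient3_rep_abs[OF Quotient3_term]) (rule equivclp_refl)
  then have "equivclp alpha X (rep_term (abs_term X))"
    by (rule equivclp_sym)
  then show ?thesis by (rule equivclp_alpha_imp_alpha[OF _ assms])
qed

lemma alphaAbs_rep_abs_abs:
  fixes A :: "('index,'bindex,'varSort,'var,'opSym) qAbs"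
  assumes "qGoodAbs A"
  shows "alphaAbs A (rep_abs (abs_abs A))"
proof -
  have "equivclp alphaAbs (rep_abs (abs_abs A)) A"
    by (rule Quotient3_rep_abs[OF Quotient3_abs]) (rule equivclp_refl)
  then have "equivclp alphaAbs A (rep_abs (abs_abs A))"
    by (rule equivclp_sym)
  then show ?thesis by (rule equivclp_alphaAbs_imp_alphaAbs[OF _ assms])
qed

lemma good_abs_term:
  fixes X :: "('index,'bindex,'varSort,'var,'opSym) qTerm"
  shows "qGood X \<Longrightarrow> good (abs_term X)"
  using alpha_qGood(1)[OF alpha_rep_abs_term[of X]] by (simp add: good_def)

lemma goodAbs_abs_abs:
  fixes A :: "('index,'bindex,'varSort,'var,'opSym) qAbs"
  shows "qGoodAbs A \<Longrightarrow> goodAbs (abs_abs A)"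
  using alpha_qGood(2)[OF alphaAbs_rep_abs_abs[of A]] by (simp add: goodAbs_def)

lemma abs_term_qOp:
  fixes inp :: "'index \<Rightarrow> ('index,'bindex,'varSort,'var,'opSym) qTerm option"
    and binp :: "'bindex \<Rightarrow> ('index,'bindex,'varSort,'var,'opSym) qAbs option"
  assumes "qGood (qOp d inp binp)"
  shows "abs_term (qOp d inp binp) = Op d (lift abs_term inp) (lift abs_abs binp)"
  unfolding Op_def
proof (rule Quotient3_rel_abs[OF Quotient3_term], rule r_into_equivclp, rule alpha_alphaAbs.alpha_Op)
  note good = qGood_qOpD[OF assms]
  show "\<forall>i X X'. inp i = Some X \<and> lift rep_term (lift abs_term inp) i = Some X' \<longrightarrow> alpha X X'"
  proof (intro allI impI, elim conjE)
    fix i X X' assume "inp i = Some X" "lift rep_term (lift abs_term inp) i = Some X'"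
    then show "alpha X X'" using good(1) alpha_rep_abs_term by (auto simp: lift_def)
  qed
  show "\<forall>i A A'. binp i = Some A \<and> lift rep_abs (lift abs_abs binp) i = Some A' \<longrightarrow> alphaAbs A A'"
  proof (intro allI impI, elim conjE)
    fix i A A' assume "binp i = Some A" "lift rep_abs (lift abs_abs binp) i = Some A'"
    then show "alphaAbs A A'" using good(2) alphaAbs_rep_abs_abs by (auto simp: lift_def)
  qed
qed (auto simp: lift_def)

lemma abs_abs_qAbs:
  fixes X :: "('index,'bindex,'varSort,'var,'opSym) qTerm"
  assumes "qGood X"
  shows "abs_abs (qAbs xs x X) = Abs xs x (abs_term X)"
  unfolding Abs_def
  by (rule Quotient3_rel_abs[OF Quotient3_abs], rule r_into_equivclp,
      rule alphaAbs_qAbs_cong[OF assms alpha_rep_abs_term[OF assms]])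

end

context fs_model
begin

lemma qInterp_rep_abs_term:
  fixes X :: "('index,'bindex,'varSort,'var,'opSym) qTerm"
  shows "qGood X \<Longrightarrow> qInterp (rep_term (abs_term X)) = qInterp X"
  using qInterp_alpha(1)[OF alpha_rep_abs_term[of X]] by simp

lemma qInterpAbs_rep_abs_abs:
  fixes A :: "('index,'bindex,'varSort,'var,'opSym) qAbs"
  shows "qGoodAbs A \<Longrightarrow> qInterpAbs (rep_abs (abs_abs A)) = qInterpAbs A"
  using qInterp_alpha(2)[OF alphaAbs_rep_abs_abs[of A]] by simp

definition interp :: "('index,'bindex,'varSort,'var,'opSym) term \<Rightarrow> 'T" where
  "interp X = qInterp (rep_term X)"

definition interpAbs :: "('index,'bindex,'varSort,'var,'opSym) abs \<Rightarrow> 'A" where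
  "interpAbs A = qInterpAbs (rep_abs A)"

lemma interp_Var: "interp (Var xs x) = VAR xs x"
  unfolding interp_def Var_def by (simp add: qInterp_rep_abs_term)

lemma interp_Op:
  assumes "liftAll good inp" "liftAll goodAbs binp"
    and "|dom inp| <o |UNIV :: 'var set|" "|dom binp| <o |UNIV :: 'var set|"
  shows "interp (Op d inp binp) = OP d (lift interp inp) (lift interpAbs binp)"
proof -
  have "dom (lift rep_term inp) = dom inp" "dom (lift rep_abs binp) = dom binp"
    by (auto simp: lift_def)
  with assms have "qGood (qOp d (lift rep_term inp) (lift rep_abs binp))"
    by (auto simp: lift_def liftAll_def good_def goodAbs_def pred_option_iff)
  then show ?thesis
    unfolding interp_def Op_def
    by (simp add: qInterp_rep_abs_term lift_def option.map_comp o_def interp_def[abs_def] interpAbs_def[abs_def])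
qed

lemma interpAbs_Abs: "good X \<Longrightarrow> interpAbs (Abs xs x X) = ABS xs x (interp X)"
  unfolding interpAbs_def Abs_def interp_def good_def by (simp add: qInterpAbs_rep_abs_abs)

lemma interp_subst: "good X \<Longrightarrow> good Y \<Longrightarrow> interp (subst X Y y ys) = SUBST (interp X) (interp Y) y ys"
  unfolding interp_def subst_def good_def by (simp add: qInterp_rep_abs_term qGood_qSubst qInterp_qSubst)

lemma interpAbs_substAbs:
  "goodAbs A \<Longrightarrow> good Y \<Longrightarrow> interpAbs (substAbs A Y y ys) = SUBSTABS (interpAbs A) (interp Y) y ys"
  unfolding interpAbs_def interp_def substAbs_def good_def goodAbs_def
  by (simp add: qInterpAbs_rep_abs_abs qGood_qSubst qInterp_qSubst)

lemma FRESH_interp: "good X \<Longrightarrow> fresh xs x X \<Longrightarrow> FRESH xs x (interp X)"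
  and FRESHABS_interpAbs: "goodAbs A \<Longrightarrow> freshAbs xs x A \<Longrightarrow> FRESHABS xs x (interpAbs A)"
  unfolding interp_def interpAbs_def good_def goodAbs_def fresh_def freshAbs_def by (fact FRESH_qInterp)+

lemma FSmorph_interp: "FSmorph VAR OP ABS FRESH FRESHABS SUBST SUBSTABS interp interpAbs"
  unfolding FSmorph_def
  by (simp add: interp_Var interp_Op interpAbs_Abs interp_subst interpAbs_substAbs FRESH_interp FRESHABS_interpAbs)

lemma FSmorph_abs_term:
  fixes X :: "('index,'bindex,'varSort,'var,'opSym) qTerm"
    and A :: "('index,'bindex,'varSort,'var,'opSym) qAbs"
  assumes morph: "FSmorph VAR OP ABS FRESH FRESHABS SUBST SUBSTABS g gAbs"
  shows "qGood X \<Longrightarrow> g (abs_term X) = qInterp X" and "qGoodAbs A \<Longrightarrow> gAbs (abs_abs A) = qInterpAbs A"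
proof (induct X and A rule: qTerm_qAbs_induct)
  case (Var xs x)
  then show ?case using morph unfolding FSmorph_def Var_def[symmetric] by simp
next
  case (Op d inp binp)
  note good = qGood_qOpD[OF Op(3)]
  have "liftAll good (lift abs_term inp)" "liftAll goodAbs (lift abs_abs binp)"
    by (auto simp: liftAll_def lift_def intro: good_abs_term goodAbs_abs_abs dest: good(1,2))
  moreover have "|dom (lift abs_term inp)| <o |UNIV :: 'var set|" "|dom (lift abs_abs binp)| <o |UNIV :: 'var set|"
    using good(3,4) by (auto simp: lift_def)
  ultimately have "g (Op d (lift abs_term inp) (lift abs_abs binp)) = OP d (lift g (lift abs_term inp)) (lift gAbs (lift abs_abs binp))"
    using morph unfolding FSmorph_def by blast
  moreover have "lift g (lift abs_term inp) = (\<lambda>i. map_option qInterp (inp i))"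
    "lift gAbs (lift abs_abs binp) = (\<lambda>i. map_option qInterpAbs (binp i))"
    using Op(1,2) good(1,2) by (auto simp: lift_def option.map_comp o_def intro!: map_option_cong_Some)
  ultimately show ?case by (simp add: abs_term_qOp[OF Op(3)])
next
  case (Abs xs x X)
  then have "good (abs_term X)" "qGood X" using good_abs_term by auto
  then show ?case using morph Abs(1) unfolding FSmorph_def by (simp add: abs_abs_qAbs)
qed

lemma FSmorph_unique:
  assumes "FSmorph VAR OP ABS FRESH FRESHABS SUBST SUBSTABS g gAbs"
  shows "good X \<Longrightarrow> interp X = g X" and "goodAbs A \<Longrightarrow> interpAbs A = gAbs A"
  using FSmorph_abs_term(1)[OF assms, of "rep_term X"] FSmorph_abs_term(2)[OF assms, of "rep_abs A"]
  by (simp_all add: interp_def interpAbs_def good_def goodAbs_def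
      Quotient3_abs_rep[OF Quotient3_term] Quotient3_abs_rep[OF Quotient3_abs])

end

theorem theorem2:
  fixes VAR :: "'varSort \<Rightarrow> 'var \<Rightarrow> 'T"
    and OP :: "'opSym \<Rightarrow> ('index \<Rightarrow> 'T option) \<Rightarrow> ('bindex \<Rightarrow> 'A option) \<Rightarrow> 'T"
    and ABS :: "'varSort \<Rightarrow> 'var \<Rightarrow> 'T \<Rightarrow> 'A"
    and FRESH :: "'varSort \<Rightarrow> 'var \<Rightarrow> 'T \<Rightarrow> bool"
    and FRESHABS :: "'varSort \<Rightarrow> 'var \<Rightarrow> 'A \<Rightarrow> bool"
    and SUBST :: "'T \<Rightarrow> 'T \<Rightarrow> 'var \<Rightarrow> 'varSort \<Rightarrow> 'T"
    and SUBSTABS :: "'A \<Rightarrow> 'T \<Rightarrow> 'var \<Rightarrow> 'varSort \<Rightarrow> 'A"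
  assumes var_infinite: "infinite (UNIV :: 'var set)"
    and var_regular: "regularCard |UNIV :: 'var set|"
    and model: "FSmodel VAR OP ABS FRESH FRESHABS SUBST SUBSTABS"
  shows "\<exists>(f :: ('index,'bindex,'varSort,'var,'opSym) term \<Rightarrow> 'T)
           (fAbs :: ('index,'bindex,'varSort,'var,'opSym) abs \<Rightarrow> 'A).
           FSmorph VAR OP ABS FRESH FRESHABS SUBST SUBSTABS f fAbs \<and>
           (\<forall>g gAbs. FSmorph VAR OP ABS FRESH FRESHABS SUBST SUBSTABS g gAbs \<longrightarrow>
              (\<forall>X. good X \<longrightarrow> f X = g X) \<and> (\<forall>A. goodAbs A \<longrightarrow> fAbs A = gAbs A))"
proof -
  interpret fs_model VAR OP ABS FRESH FRESHABS SUBST SUBSTABS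
    by (rule fs_model.intro[OF infinite_regular_var.intro[OF var_infinite var_regular]
          fs_model_axioms_if_FSmodel[OF model]])
  show ?thesis
    using FSmorph_interp FSmorph_unique by blast
qed

end
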